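(* Let $(\Omega,\mathcal F)$ be a measurable space, $\mathcal X$ the set of bounded measurable functions, $\mathcal S$ the set of all submodular capacities on $(\Omega,\mathcal F)$, $\alpha_1,\dots,\alpha_n\in(0,1]$, and $w_1,\dots,w_n\in\mathcal S$. Then for all $X\in\mathcal X$, $$\mathop{\square}_{i=1}^n\mathrm{ES}^{w_i}_{\alpha_i}(X)=\sup\Big\{I_w(X): w\in\mathcal S,\ w(A)\le\min_{1\le i\le n}\frac{w_i(A)}{\alpha_i}\ \text{for all }A\in\mathcal F\Big\},$$ with $\sup\varnothing=-\infty$. In particular, for a submodular capacity $w$, $\mathop{\square}_{i=1}^n\mathrm{ES}^{w}_{\alpha_i}=\mathrm{ES}^w_{\max_i\alpha_i}$.
   Context: A capacity is an increasing function $w:\mathcal F\to\mathbb R$ with $w(\varnothing)=0$, $w(\Omega)=1$; it is submodular if $w(A\cup B)+w(A\cap B)\le w(A)+w(B)$ for all $A,B\in\mathcal F$. $I_w(X)=\int_{-\infty}^0(w(X\ge x)-1)\,\mathrm dx+\int_0^\infty w(X\ge x)\,\mathrm dx$. $\mathrm{VaR}^w_t(X)=\inf\{x\in\mathbb R:w(X\ge x)\le t\}$ and $\mathrm{ES}^w_\alpha(X)=\frac1\alpha\int_0^\alpha\mathrm{VaR}^w_t(X)\,\mathrm dt$. Inf-convolution: $\mathop{\square}_{i=1}^n\rho_i(X)=\inf\{\sum_i\rho_i(X_i): X_i\in\mathcal X,\ \sum_iX_i=X\}$. *)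

theory Defs
  imports "HOL-Analysis.Analysis"
begin

text \<open>Capacities on the measurable space (space M, sets M): increasing on sets M,
  w {} = 0, w (space M) = 1.  Values outside sets M are irrelevant.\<close>
definition capacity :: "'a measure \<Rightarrow> ('a set \<Rightarrow> real) \<Rightarrow> bool" where
  "capacity M w \<longleftrightarrow>
     (\<forall>A\<in>sets M. \<forall>B\<in>sets M. A \<subseteq> B \<longrightarrow> w A \<le> w B) \<and> w {} = 0 \<and> w (space M) = 1"

definition submodular_capacity :: "'a measure \<Rightarrow> ('a set \<Rightarrow> real) \<Rightarrow> bool" where
  "submodular_capacity M w \<longleftrightarrow> capacity M w \<and>
     (\<forall>A\<in>sets M. \<forall>B\<in>sets M. w (A \<union> B) + w (A \<inter> B) \<le> w A + w B)"

definition bdd_meas :: "'a measure \<Rightarrow> ('a \<Rightarrow> real) set" where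
  "bdd_meas M = {X. X \<in> borel_measurable M \<and> (\<exists>c. \<forall>\<omega>\<in>space M. \<bar>X \<omega>\<bar> \<le> c)}"

definition upper_set :: "'a measure \<Rightarrow> ('a \<Rightarrow> real) \<Rightarrow> real \<Rightarrow> 'a set" where
  "upper_set M X x = {\<omega> \<in> space M. x \<le> X \<omega>}"

definition choquet :: "'a measure \<Rightarrow> ('a set \<Rightarrow> real) \<Rightarrow> ('a \<Rightarrow> real) \<Rightarrow> real" where
  "choquet M w X = (LBINT x:{..0}. w (upper_set M X x) - 1) + (LBINT x:{0..}. w (upper_set M X x))"

definition VaR :: "'a measure \<Rightarrow> ('a set \<Rightarrow> real) \<Rightarrow> real \<Rightarrow> ('a \<Rightarrow> real) \<Rightarrow> real" where
  "VaR M w t X = Inf {x. w (upper_set M X x) \<le> t}"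

definition ES :: "'a measure \<Rightarrow> ('a set \<Rightarrow> real) \<Rightarrow> real \<Rightarrow> ('a \<Rightarrow> real) \<Rightarrow> real" where
  "ES M w \<alpha> X = (1 / \<alpha>) * (LBINT t:{0..\<alpha>}. VaR M w t X)"

text \<open>Inf-convolution of \<rho>_0,...,\<rho>_{n-1} over bounded measurable decompositions
  (extended-real valued, as the infimum may be -\<infinity>).\<close>
definition inf_conv :: "'a measure \<Rightarrow> nat \<Rightarrow> (nat \<Rightarrow> ('a \<Rightarrow> real) \<Rightarrow> real) \<Rightarrow> ('a \<Rightarrow> real) \<Rightarrow> ereal" where
  "inf_conv M n \<rho> X = Inf {ereal (\<Sum>i<n. \<rho> i (Y i)) | Y.
       (\<forall>i<n. Y i \<in> bdd_meas M) \<and> (\<forall>\<omega>\<in>space M. (\<Sum>i<n. Y i \<omega>) = X \<omega>)}"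

end

theory Submission
  imports Defs
begin

text \<open>
  For a capacity \<open>w\<close> and \<open>\<alpha> \<in> (0, 1]\<close>, \<open>ES\<^sup>w\<^sub>\<alpha>\<close> is the Choquet integral for the
  distorted capacity \<open>min (w / \<alpha>) 1\<close>, which is submodular whenever \<open>w\<close> is. Choquet integrals of
  submodular capacities are subadditive: discretise \<open>X\<close> and \<open>Y\<close> on a grid, and note that adding an
  indicator \<open>1\<^sub>B\<close> to an integer-valued step function raises its level sum by at most \<open>w B\<close>.
  Hence every submodular \<open>w \<le> min\<^sub>i w\<^sub>i / \<alpha>\<^sub>i\<close> has \<open>I\<^sub>w X \<le> \<Sum>\<^sub>i ES(X\<^sub>i)\<close> for every
  decomposition \<open>X = \<Sum>\<^sub>i X\<^sub>i\<close>. Conversely, if the inf-convolution is finite at \<open>X\<close>, it is a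
  real-valued, monotone, sublinear functional that is the identity on constants. By Hahn-Banach it
  dominates a linear functional \<open>f\<close> that agrees with it at \<open>X\<close>, and \<open>f\<close> is the Choquet integral
  for the additive capacity \<open>A \<mapsto> f 1\<^sub>A \<le> ES(1\<^sub>A) \<le> w\<^sub>i A / \<alpha>\<^sub>i\<close>. When all capacities
  are equal, the capacity distorted by the largest \<open>\<alpha>\<^sub>i\<close> is admissible, and the trivial
  decomposition attains its Choquet integral.
\<close>

lemma capacity_mono: "capacity M v \<Longrightarrow> A \<in> sets M \<Longrightarrow> B \<in> sets M \<Longrightarrow> A \<subseteq> B \<Longrightarrow> v A \<le> v B"
  unfolding capacity_def by blast

lemma capacity_empty: "capacity M v \<Longrightarrow> v {} = 0"
  unfolding capacity_def by blast

lemma capacity_space: "capacity M v \<Longrightarrow> v (space M) = 1"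
  unfolding capacity_def by blast

lemma capacity_nonneg: "capacity M v \<Longrightarrow> A \<in> sets M \<Longrightarrow> 0 \<le> v A"
  using capacity_mono[of M v "{}" A] capacity_empty[of M v] by auto

lemma capacity_le_1: "capacity M v \<Longrightarrow> A \<in> sets M \<Longrightarrow> v A \<le> 1"
  using capacity_mono[of M v A "space M"] capacity_space[of M v] sets.sets_into_space by auto

lemma submodular_capacityD:
  assumes "submodular_capacity M v"
  shows "capacity M v"
    and "A \<in> sets M \<Longrightarrow> B \<in> sets M \<Longrightarrow> v (A \<union> B) + v (A \<inter> B) \<le> v A + v B"
  using assms unfolding submodular_capacity_def by auto

lemma upper_set_sets[measurable]: "X \<in> borel_measurable M \<Longrightarrow> upper_set M X x \<in> sets M"
  unfolding upper_set_def by measurable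

lemma upper_set_antimono: "x \<le> y \<Longrightarrow> upper_set M X y \<subseteq> upper_set M X x"
  unfolding upper_set_def by auto

lemma upper_set_eq_space: "(\<And>\<omega>. \<omega> \<in> space M \<Longrightarrow> x \<le> X \<omega>) \<Longrightarrow> upper_set M X x = space M"
  unfolding upper_set_def by auto

lemma upper_set_eq_empty: "(\<And>\<omega>. \<omega> \<in> space M \<Longrightarrow> X \<omega> < x) \<Longrightarrow> upper_set M X x = {}"
  unfolding upper_set_def by force

lemma upper_set_cong: "(\<And>\<omega>. \<omega> \<in> space M \<Longrightarrow> X \<omega> = Y \<omega>) \<Longrightarrow> upper_set M X = upper_set M Y"
  unfolding upper_set_def by (auto simp: fun_eq_iff)

lemma antimono_capacity_upper_set:
  "capacity M v \<Longrightarrow> X \<in> borel_measurable M \<Longrightarrow> antimono (\<lambda>x. v (upper_set M X x))"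
  by (intro antimonoI capacity_mono upper_set_antimono) (auto intro: upper_set_sets)

lemma borel_measurable_antimono:
  fixes g :: "real \<Rightarrow> real"
  assumes "antimono g"
  shows "g \<in> borel_measurable borel"
proof -
  have "(\<lambda>x. - g x) \<in> borel_measurable borel"
    using assms by (intro borel_measurable_mono) (auto simp: mono_def antimono_def)
  then show ?thesis
    using borel_measurable_uminus[of "\<lambda>x. - g x"] by simp
qed

lemma integrable_on_antimono:
  fixes g :: "real \<Rightarrow> real"
  assumes "antimono g"
  shows "g integrable_on {a..b}"
proof -
  have "(\<lambda>x. - g x) integrable_on {a..b}"
    using assms by (intro integrable_on_mono_on) (auto simp: mono_on_def antimono_def)
  then show ?thesis
    using integrable_neg[of "\<lambda>x. - g x"] by simp
qed

lemma set_integrable_bounded_Icc: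
  fixes g :: "real \<Rightarrow> real"
  assumes "g \<in> borel_measurable borel" "\<And>x. \<bar>g x\<bar> \<le> B"
  shows "set_integrable lborel {c..d} g"
  unfolding set_integrable_def
  by (rule integrableI_bounded_set_indicator[where B=B])
    (use assms in \<open>auto simp: emeasure_lborel_Icc_eq\<close>)

locale survival_function =
  fixes g :: "real \<Rightarrow> real" and a b :: real
  assumes antimono: "antimono g"
    and eq_1: "\<And>x. x \<le> a \<Longrightarrow> g x = 1"
    and eq_0: "\<And>x. b < x \<Longrightarrow> g x = 0"
begin

lemma bounds: "0 \<le> g x" "g x \<le> 1"
  using antimonoD[OF antimono, of x "max x b + 1"] antimonoD[OF antimono, of "min x a" x]
    eq_0[of "max x b + 1"] eq_1[of "min x a"] by auto

lemma a_le_b: "a \<le> b"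
  using eq_0[of a] eq_1[of a] by force

lemma borel_measurable[measurable]: "g \<in> borel_measurable borel"
  by (rule borel_measurable_antimono[OF antimono])

lemma tail_integrals_eq_interval_integral:
  "(LBINT x:{..0}. g x - 1) + (LBINT x:{0..}. g x) = a + integral {a..b} g"
proof -
  have gi: "g integrable_on {c..d}" for c d
    by (rule integrable_on_antimono[OF antimono])
  define c where "c = min a 0"
  define d where "d = max b 0"
  have c: "c \<le> a" "c \<le> 0" and d: "b \<le> d" "0 \<le> d"
    unfolding c_def d_def by auto
  have "(LBINT x:{..0}. g x - 1) = (LBINT x:{c..0}. g x - 1)"
    unfolding set_lebesgue_integral_def
    by (intro Bochner_Integration.integral_cong) (use eq_1 c in \<open>auto simp: indicator_def\<close>)
  also have "\<dots> = integral {c..0} (\<lambda>x. g x - 1)"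
    by (rule set_borel_integral_eq_integral(2), rule set_integrable_bounded_Icc[where B=1])
      (use bounds in \<open>auto simp: abs_le_iff\<close>)
  also have "\<dots> = integral {c..0} g + c"
    using integral_diff[OF gi[of c 0] integrable_const_ivl[of 1 c 0]] c by simp
  finally have neg: "(LBINT x:{..0}. g x - 1) = integral {c..0} g + c" .
  have "(LBINT x:{0..}. g x) = (LBINT x:{0..d}. g x)"
    unfolding set_lebesgue_integral_def
    by (intro Bochner_Integration.integral_cong) (use eq_0 d in \<open>auto simp: indicator_def\<close>)
  also have "\<dots> = integral {0..d} g"
    by (rule set_borel_integral_eq_integral(2), rule set_integrable_bounded_Icc[where B=1])
      (use bounds in auto)
  finally have pos: "(LBINT x:{0..}. g x) = integral {0..d} g" .
  have "integral {c..a} g = integral {c..a} (\<lambda>x. 1)"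
    by (rule integral_cong) (use eq_1 in auto)
  then have left: "integral {c..a} g = a - c"
    using c by simp
  have "integral {b..d} g = integral {b..d} (\<lambda>x. 0)"
    by (rule integral_spike[where S="{b}"]) (use eq_0 in auto)
  then have right: "integral {b..d} g = 0"
    by simp
  have "integral {c..0} g + integral {0..d} g = integral {c..d} g"
    "integral {c..a} g + integral {a..d} g = integral {c..d} g"
    "integral {a..b} g + integral {b..d} g = integral {a..d} g"
    by (rule Henstock_Kurzweil_Integration.integral_combine; use c d a_le_b gi in auto)+
  then show ?thesis
    using neg pos left right by linarith
qed

end

lemma survival_function_upper_set:
  assumes cap: "capacity M v" and Xm: "X \<in> borel_measurable M"
    and bnd: "\<And>\<omega>. \<omega> \<in> space M \<Longrightarrow> a \<le> X \<omega> \<and> X \<omega> \<le> b"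
  shows "survival_function (\<lambda>x. v (upper_set M X x)) a b"
proof
  show "antimono (\<lambda>x. v (upper_set M X x))"
    by (rule antimono_capacity_upper_set[OF cap Xm])
  show "v (upper_set M X x) = 1" if "x \<le> a" for x
    using upper_set_eq_space[of M x X] bnd that capacity_space[OF cap] by force
  show "v (upper_set M X x) = 0" if "b < x" for x
    using upper_set_eq_empty[of M X x] bnd that capacity_empty[OF cap] by force
qed

lemma choquet_eq_interval_integral:
  assumes "capacity M v" "X \<in> borel_measurable M"
    and "\<And>\<omega>. \<omega> \<in> space M \<Longrightarrow> a \<le> X \<omega> \<and> X \<omega> \<le> b"
  shows "choquet M v X = a + integral {a..b} (\<lambda>x. v (upper_set M X x))"
  unfolding choquet_def
  by (rule survival_function.tail_integrals_eq_interval_integral[OF survival_function_upper_set[OF assms]])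

lemma bdd_measI:
  "X \<in> borel_measurable M \<Longrightarrow> (\<And>\<omega>. \<omega> \<in> space M \<Longrightarrow> \<bar>X \<omega>\<bar> \<le> c) \<Longrightarrow> X \<in> bdd_meas M"
  unfolding bdd_meas_def by auto

lemma bdd_meas_borel: "X \<in> bdd_meas M \<Longrightarrow> X \<in> borel_measurable M"
  unfolding bdd_meas_def by auto

lemma bdd_meas_bounds:
  assumes "X \<in> bdd_meas M"
  obtains a b where "\<And>\<omega>. \<omega> \<in> space M \<Longrightarrow> a \<le> X \<omega> \<and> X \<omega> \<le> b"
proof -
  obtain c where "\<forall>\<omega>\<in>space M. \<bar>X \<omega>\<bar> \<le> c"
    using assms unfolding bdd_meas_def by auto
  then show thesis
    by (intro that[of "-c" c]) (auto simp: abs_le_iff minus_le_iff)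
qed

lemma bdd_meas_add:
  assumes "X \<in> bdd_meas M" "Y \<in> bdd_meas M"
  shows "(\<lambda>\<omega>. X \<omega> + Y \<omega>) \<in> bdd_meas M"
proof -
  obtain c d where "\<forall>\<omega>\<in>space M. \<bar>X \<omega>\<bar> \<le> c" "\<forall>\<omega>\<in>space M. \<bar>Y \<omega>\<bar> \<le> d"
    using assms unfolding bdd_meas_def by auto
  then have "\<bar>X \<omega> + Y \<omega>\<bar> \<le> c + d" if "\<omega> \<in> space M" for \<omega>
    using that abs_triangle_ineq[of "X \<omega>" "Y \<omega>"] by force
  then show ?thesis
    using bdd_meas_borel[OF assms(1)] bdd_meas_borel[OF assms(2)]
    by (intro bdd_measI[where c="c + d"]) auto
qed

lemma bdd_meas_cmult:
  assumes "X \<in> bdd_meas M"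
  shows "(\<lambda>\<omega>. r * X \<omega>) \<in> bdd_meas M"
proof -
  obtain c where "\<forall>\<omega>\<in>space M. \<bar>X \<omega>\<bar> \<le> c"
    using assms unfolding bdd_meas_def by auto
  then have "\<bar>r * X \<omega>\<bar> \<le> \<bar>r\<bar> * c" if "\<omega> \<in> space M" for \<omega>
    using that by (simp add: abs_mult mult_left_mono)
  then show ?thesis
    using bdd_meas_borel[OF assms] by (intro bdd_measI[where c="\<bar>r\<bar> * c"]) auto
qed

lemma bdd_meas_diff: "X \<in> bdd_meas M \<Longrightarrow> Y \<in> bdd_meas M \<Longrightarrow> (\<lambda>\<omega>. X \<omega> - Y \<omega>) \<in> bdd_meas M"
  using bdd_meas_add[of X M "\<lambda>\<omega>. (-1) * Y \<omega>"] bdd_meas_cmult[of Y M "-1"] by simp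

lemma bdd_meas_const: "(\<lambda>\<omega>. r) \<in> bdd_meas M"
  by (rule bdd_measI[where c="\<bar>r\<bar>"]) auto

lemma bdd_meas_indicator: "A \<in> sets M \<Longrightarrow> (indicator A :: 'a \<Rightarrow> real) \<in> bdd_meas M"
  by (rule bdd_measI[where c=1]) (auto simp: indicator_def)

lemma bdd_meas_sum:
  "finite F \<Longrightarrow> (\<And>j. j \<in> F \<Longrightarrow> Y j \<in> bdd_meas M) \<Longrightarrow> (\<lambda>\<omega>. \<Sum>j\<in>F. Y j \<omega>) \<in> bdd_meas M"
  by (induction F rule: finite_induct) (auto intro: bdd_meas_const bdd_meas_add)

lemma choquet_cong: "(\<And>\<omega>. \<omega> \<in> space M \<Longrightarrow> X \<omega> = Y \<omega>) \<Longrightarrow> choquet M v X = choquet M v Y"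
  unfolding choquet_def using upper_set_cong[of M X Y] by simp

lemma choquet_mono:
  assumes cap: "capacity M u" "capacity M v" and uv: "\<And>A. A \<in> sets M \<Longrightarrow> u A \<le> v A"
    and X: "X \<in> bdd_meas M" and Y: "Y \<in> bdd_meas M"
    and XY: "\<And>\<omega>. \<omega> \<in> space M \<Longrightarrow> X \<omega> \<le> Y \<omega>"
  shows "choquet M u X \<le> choquet M v Y"
proof -
  obtain a1 b1 where 1: "\<And>\<omega>. \<omega> \<in> space M \<Longrightarrow> a1 \<le> X \<omega> \<and> X \<omega> \<le> b1"
    using bdd_meas_bounds[OF X] by blast
  obtain a2 b2 where 2: "\<And>\<omega>. \<omega> \<in> space M \<Longrightarrow> a2 \<le> Y \<omega> \<and> Y \<omega> \<le> b2"
    using bdd_meas_bounds[OF Y] by blast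
  define a where "a = min a1 a2"
  define b where "b = max b1 b2"
  have Xm: "X \<in> borel_measurable M" and Ym: "Y \<in> borel_measurable M"
    using X Y by (auto dest: bdd_meas_borel)
  have "choquet M u X = a + integral {a..b} (\<lambda>x. u (upper_set M X x))"
    by (rule choquet_eq_interval_integral[OF cap(1) Xm]) (use 1 a_def b_def in force)
  moreover have "choquet M v Y = a + integral {a..b} (\<lambda>x. v (upper_set M Y x))"
    by (rule choquet_eq_interval_integral[OF cap(2) Ym]) (use 2 a_def b_def in force)
  moreover have "integral {a..b} (\<lambda>x. u (upper_set M X x)) \<le> integral {a..b} (\<lambda>x. v (upper_set M Y x))"
  proof (rule integral_le)
    fix x
    have "upper_set M X x \<subseteq> upper_set M Y x"
      using XY unfolding upper_set_def by force
    then have "v (upper_set M X x) \<le> v (upper_set M Y x)"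
      by (intro capacity_mono[OF cap(2)] upper_set_sets Xm Ym)
    moreover have "u (upper_set M X x) \<le> v (upper_set M X x)"
      by (intro uv upper_set_sets Xm)
    ultimately show "u (upper_set M X x) \<le> v (upper_set M Y x)"
      by linarith
  qed (intro integrable_on_antimono antimono_capacity_upper_set cap Xm Ym)+
  ultimately show ?thesis
    by linarith
qed

lemma choquet_const: "capacity M v \<Longrightarrow> choquet M v (\<lambda>\<omega>. r) = r"
  using choquet_eq_interval_integral[of M v "\<lambda>\<omega>. r" r r] by simp

lemma choquet_indicator:
  assumes cap: "capacity M v" and A: "A \<in> sets M"
  shows "choquet M v (indicator A) = v A"
proof -
  have "choquet M v (indicator A) = 0 + integral {0..1} (\<lambda>x. v (upper_set M (indicator A) x))"
    by (rule choquet_eq_interval_integral[OF cap]) (use A in \<open>auto simp: indicator_def\<close>)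
  also have "integral {0..1} (\<lambda>x. v (upper_set M (indicator A) x)) = integral {0..1} (\<lambda>x::real. v A)"
  proof (rule integral_spike[where S="{0}"])
    fix x :: real
    assume "x \<in> {0..1} - {0}"
    then have "upper_set M (indicator A) x = A"
      using sets.sets_into_space[OF A] unfolding upper_set_def by (auto simp: indicator_def)
    then show "v A = v (upper_set M (indicator A) x)"
      by simp
  qed auto
  finally show ?thesis
    by simp
qed

lemma choquet_cmult:
  assumes cap: "capacity M v" and X: "X \<in> bdd_meas M" and r: "0 < r"
  shows "choquet M v (\<lambda>\<omega>. r * X \<omega>) = r * choquet M v X"
proof -
  obtain a b where ab: "\<And>\<omega>. \<omega> \<in> space M \<Longrightarrow> a \<le> X \<omega> \<and> X \<omega> \<le> b"
    using bdd_meas_bounds[OF X] by blast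
  have Xm: "X \<in> borel_measurable M"
    using X by (rule bdd_meas_borel)
  define g where "g = (\<lambda>x. v (upper_set M X x))"
  have "upper_set M (\<lambda>\<omega>. r * X \<omega>) x = upper_set M X (x / r)" for x
    unfolding upper_set_def using r by (auto simp: field_simps)
  then have "choquet M v (\<lambda>\<omega>. r * X \<omega>) = r * a + integral {r * a..r * b} (\<lambda>x. g (x / r))"
    unfolding g_def by (subst choquet_eq_interval_integral[OF cap _, of _ "r * a" "r * b"])
      (use Xm ab r in auto)
  moreover have "(g has_integral integral {a..b} g) (cbox a b)"
    using integrable_on_antimono[OF antimono_capacity_upper_set[OF cap Xm]]
    unfolding g_def box_real by (simp add: integrable_integral)
  from has_integral_affinity'[OF this, of "1 / r" 0]
  have "integral {r * a..r * b} (\<lambda>x. g (x / r)) = r * integral {a..b} g"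
    using r by (intro integral_unique) (simp add: field_simps)
  moreover have "choquet M v X = a + integral {a..b} g"
    unfolding g_def by (rule choquet_eq_interval_integral[OF cap Xm ab])
  ultimately show ?thesis
    by (simp add: distrib_left)
qed

section \<open>Subadditivity for submodular capacities\<close>

definition discrete_choquet :: "'a measure \<Rightarrow> ('a set \<Rightarrow> real) \<Rightarrow> nat \<Rightarrow> ('a \<Rightarrow> nat) \<Rightarrow> real" where
  "discrete_choquet M v N Z = (\<Sum>k=1..N. v {\<omega> \<in> space M. k \<le> Z \<omega>})"

lemma discrete_choquet_cong:
  "(\<And>\<omega>. \<omega> \<in> space M \<Longrightarrow> Z \<omega> = Z' \<omega>) \<Longrightarrow> discrete_choquet M v N Z = discrete_choquet M v N Z'"
  unfolding discrete_choquet_def by (intro sum.cong arg_cong[of _ _ v]) auto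

lemma discrete_choquet_extend:
  assumes cap: "capacity M v" and ZN: "\<And>\<omega>. \<omega> \<in> space M \<Longrightarrow> Z \<omega> \<le> N" and "N \<le> N'"
  shows "discrete_choquet M v N' Z = discrete_choquet M v N Z"
  unfolding discrete_choquet_def
proof (intro sum.mono_neutral_right ballI)
  fix k
  assume "k \<in> {1..N'} - {1..N}"
  then have "{\<omega> \<in> space M. k \<le> Z \<omega>} = {}"
    using ZN by force
  then show "v {\<omega> \<in> space M. k \<le> Z \<omega>} = 0"
    using capacity_empty[OF cap] by (simp only:)
qed (use \<open>N \<le> N'\<close> in auto)

lemma le_step_iff:
  fixes \<delta> :: real
  assumes \<delta>: "0 < \<delta>" and x: "a + real m * \<delta> < x" "x \<le> a + real m * \<delta> + \<delta>"
  shows "x \<le> a + \<delta> * real j \<longleftrightarrow> Suc m \<le> j"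
proof
  assume "x \<le> a + \<delta> * real j"
  then have "\<delta> * real m < \<delta> * real j"
    using x mult.commute[of \<delta> "real m"] by linarith
  then show "Suc m \<le> j"
    using \<delta> by (simp add: mult_less_cancel_left_pos)
next
  assume "Suc m \<le> j"
  then have "real m * \<delta> + \<delta> \<le> real j * \<delta>"
    using \<delta> mult_right_mono[of "real (Suc m)" "real j" \<delta>] by (simp add: algebra_simps)
  then show "x \<le> a + \<delta> * real j"
    using x by (simp add: mult.commute)
qed

lemma choquet_step_function:
  assumes cap: "capacity M v" and Z[measurable]: "Z \<in> M \<rightarrow>\<^sub>M count_space UNIV"
    and ZN: "\<And>\<omega>. \<omega> \<in> space M \<Longrightarrow> Z \<omega> \<le> N" and \<delta>: "0 < \<delta>"
  shows "choquet M v (\<lambda>\<omega>. a + \<delta> * real (Z \<omega>)) = a + \<delta> * discrete_choquet M v N Z"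
proof -
  define W where "W = (\<lambda>\<omega>. a + \<delta> * real (Z \<omega>))"
  define g where "g = (\<lambda>x. v (upper_set M W x))"
  have Wm: "W \<in> borel_measurable M"
    unfolding W_def by measurable
  have gi: "g integrable_on {c..d}" for c d
    unfolding g_def by (intro integrable_on_antimono antimono_capacity_upper_set cap Wm)
  have level: "g x = v {\<omega> \<in> space M. Suc m \<le> Z \<omega>}"
    if "a + real m * \<delta> < x" "x \<le> a + real m * \<delta> + \<delta>" for m x
    unfolding g_def W_def upper_set_def using le_step_iff[OF \<delta> that] by simp
  have partial: "integral {a..a + real m * \<delta>} g = \<delta> * (\<Sum>k=1..m. v {\<omega> \<in> space M. k \<le> Z \<omega>})" for m
  proof (induction m)
    case (Suc m)
    let ?p = "a + real m * \<delta>"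
    have "integral {?p..?p + \<delta>} (\<lambda>x. v {\<omega> \<in> space M. Suc m \<le> Z \<omega>}) = integral {?p..?p + \<delta>} g"
      by (rule integral_spike[where S="{?p}"]) (use level in auto)
    then have "integral {?p..?p + \<delta>} g = \<delta> * v {\<omega> \<in> space M. Suc m \<le> Z \<omega>}"
      using \<delta> by simp
    moreover have "integral {a..?p} g + integral {?p..?p + \<delta>} g = integral {a..?p + \<delta>} g"
      by (rule Henstock_Kurzweil_Integration.integral_combine) (use \<delta> gi in auto)
    ultimately show ?case
      using Suc by (simp add: algebra_simps)
  qed simp
  have "W \<omega> \<le> a + real N * \<delta>" if "\<omega> \<in> space M" for \<omega>
    using mult_right_mono[of "real (Z \<omega>)" "real N" \<delta>] ZN[OF that] \<delta>
    unfolding W_def by (simp add: mult.commute)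
  then have "choquet M v W = a + integral {a..a + real N * \<delta>} g"
    unfolding g_def using \<delta> by (intro choquet_eq_interval_integral[OF cap Wm]) (auto simp: W_def)
  then show ?thesis
    unfolding partial discrete_choquet_def W_def .
qed

lemma bdd_meas_step_function:
  assumes Z[measurable]: "Z \<in> M \<rightarrow>\<^sub>M count_space UNIV" and ZN: "\<And>\<omega>. \<omega> \<in> space M \<Longrightarrow> Z \<omega> \<le> N"
  shows "(\<lambda>\<omega>. a + \<delta> * real (Z \<omega>)) \<in> bdd_meas M"
proof (rule bdd_measI[where c="\<bar>a\<bar> + \<bar>\<delta>\<bar> * real N"])
  show "(\<lambda>\<omega>. a + \<delta> * real (Z \<omega>)) \<in> borel_measurable M"
    by measurable
  show "\<bar>a + \<delta> * real (Z \<omega>)\<bar> \<le> \<bar>a\<bar> + \<bar>\<delta>\<bar> * real N" if "\<omega> \<in> space M" for \<omega>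
    using ZN[OF that] abs_triangle_ineq[of a "\<delta> * real (Z \<omega>)"]
      mult_left_mono[of "real (Z \<omega>)" "real N" "\<bar>\<delta>\<bar>"] by (simp add: abs_mult)
qed

lemma discretization:
  fixes \<delta> :: real
  assumes [measurable]: "X \<in> borel_measurable M"
    and ab: "\<And>\<omega>. \<omega> \<in> space M \<Longrightarrow> a \<le> X \<omega> \<and> X \<omega> \<le> b" and \<delta>: "0 < \<delta>"
  obtains Z :: "'a \<Rightarrow> nat" and N where "Z \<in> M \<rightarrow>\<^sub>M count_space UNIV"
    and "\<And>\<omega>. \<omega> \<in> space M \<Longrightarrow> Z \<omega> \<le> N"
    and "\<And>\<omega>. \<omega> \<in> space M \<Longrightarrow> a + \<delta> * real (Z \<omega>) \<le> X \<omega> \<and> X \<omega> \<le> a + \<delta> * real (Z \<omega>) + \<delta>"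
proof
  define t where "t = (\<lambda>\<omega>. (X \<omega> - a) / \<delta>)"
  show "(\<lambda>\<omega>. nat \<lfloor>t \<omega>\<rfloor>) \<in> M \<rightarrow>\<^sub>M count_space UNIV"
    unfolding t_def by measurable
  fix \<omega>
  assume \<omega>: "\<omega> \<in> space M"
  have "t \<omega> \<le> (b - a) / \<delta>"
    unfolding t_def using ab[OF \<omega>] \<delta> by (simp add: divide_right_mono)
  then show "nat \<lfloor>t \<omega>\<rfloor> \<le> nat \<lceil>(b - a) / \<delta>\<rceil>"
    by (intro nat_mono) linarith
  have "0 \<le> t \<omega>"
    unfolding t_def using ab[OF \<omega>] \<delta> by simp
  then have "real (nat \<lfloor>t \<omega>\<rfloor>) \<le> t \<omega> \<and> t \<omega> \<le> real (nat \<lfloor>t \<omega>\<rfloor>) + 1"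
    by linarith
  then show "a + \<delta> * real (nat \<lfloor>t \<omega>\<rfloor>) \<le> X \<omega> \<and> X \<omega> \<le> a + \<delta> * real (nat \<lfloor>t \<omega>\<rfloor>) + \<delta>"
    unfolding t_def using \<delta> by (simp add: field_simps)
qed

lemma choquet_discretization_bounds:
  assumes cap: "capacity M v" and X: "X \<in> bdd_meas M"
    and Z: "Z \<in> M \<rightarrow>\<^sub>M count_space UNIV" and ZN: "\<And>\<omega>. \<omega> \<in> space M \<Longrightarrow> Z \<omega> \<le> N"
    and \<delta>: "0 < \<delta>"
    and XZ: "\<And>\<omega>. \<omega> \<in> space M \<Longrightarrow> a + \<delta> * real (Z \<omega>) \<le> X \<omega> \<and> X \<omega> \<le> a + \<delta> * real (Z \<omega>) + \<delta>"
  shows "a + \<delta> * discrete_choquet M v N Z \<le> choquet M v X"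
    and "choquet M v X \<le> a + \<delta> * discrete_choquet M v N Z + \<delta>"
proof -
  have "choquet M v (\<lambda>\<omega>. a + \<delta> * real (Z \<omega>)) \<le> choquet M v X"
    by (rule choquet_mono[OF cap cap _ bdd_meas_step_function[OF Z ZN] X]) (use XZ in auto)
  then show "a + \<delta> * discrete_choquet M v N Z \<le> choquet M v X"
    using choquet_step_function[OF cap Z ZN \<delta>, of a] by simp
  have "X \<omega> \<le> (a + \<delta>) + \<delta> * real (Z \<omega>)" if "\<omega> \<in> space M" for \<omega>
    using XZ[OF that] by linarith
  then have "choquet M v X \<le> choquet M v (\<lambda>\<omega>. (a + \<delta>) + \<delta> * real (Z \<omega>))"
    by (intro choquet_mono[OF cap cap _ X bdd_meas_step_function[OF Z ZN]]) auto
  then show "choquet M v X \<le> a + \<delta> * discrete_choquet M v N Z + \<delta>"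
    using choquet_step_function[OF cap Z ZN \<delta>, of "a + \<delta>"] by simp
qed

lemma discrete_choquet_add_indicator_le:
  assumes v: "submodular_capacity M v"
    and [measurable]: "Z \<in> M \<rightarrow>\<^sub>M count_space UNIV" "B \<in> sets M"
  shows "discrete_choquet M v N (\<lambda>\<omega>. Z \<omega> + of_bool (\<omega> \<in> B)) \<le> discrete_choquet M v N Z + v B"
proof -
  \<comment> \<open>Level \<open>k + 1\<close> of \<open>Z + 1\<^sub>B\<close> is \<open>{k + 1 \<le> Z} \<union> (B \<inter> {k \<le> Z})\<close>; submodularity makes the sum telescope.\<close>
  have "discrete_choquet M v N (\<lambda>\<omega>. Z \<omega> + of_bool (\<omega> \<in> B)) + v (B \<inter> {\<omega> \<in> space M. N \<le> Z \<omega>})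
      \<le> discrete_choquet M v N Z + v B"
  proof (induction N)
    case 0
    have "B \<inter> {\<omega> \<in> space M. 0 \<le> Z \<omega>} = B"
      using sets.sets_into_space[of B M] by auto
    then show ?case
      by (simp add: discrete_choquet_def)
  next
    case (Suc N)
    let ?L = "{\<omega> \<in> space M. Suc N \<le> Z \<omega>}" and ?E = "B \<inter> {\<omega> \<in> space M. N \<le> Z \<omega>}"
    have "{\<omega> \<in> space M. Suc N \<le> Z \<omega> + of_bool (\<omega> \<in> B)} = ?L \<union> ?E"
      and "?L \<inter> ?E = B \<inter> ?L"
      by auto
    moreover have "v (?L \<union> ?E) + v (?L \<inter> ?E) \<le> v ?L + v ?E"
      by (rule submodular_capacityD(2)[OF v]) measurable
    ultimately show ?case
      using Suc by (simp add: discrete_choquet_def)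
  qed
  moreover have "0 \<le> v (B \<inter> {\<omega> \<in> space M. N \<le> Z \<omega>})"
    by (rule capacity_nonneg[OF submodular_capacityD(1)[OF v]]) measurable
  ultimately show ?thesis
    by linarith
qed

lemma discrete_choquet_add_indicators_le:
  assumes v: "submodular_capacity M v" and "finite F" and B: "\<And>j. j \<in> F \<Longrightarrow> B j \<in> sets M"
  shows "Z \<in> M \<rightarrow>\<^sub>M count_space UNIV \<Longrightarrow>
    discrete_choquet M v N (\<lambda>\<omega>. Z \<omega> + (\<Sum>j\<in>F. of_bool (\<omega> \<in> B j)))
      \<le> discrete_choquet M v N Z + (\<Sum>j\<in>F. v (B j))"
  using \<open>finite F\<close> B
proof (induction F arbitrary: Z rule: finite_induct)
  case (insert j F)
  have [measurable]: "Z \<in> M \<rightarrow>\<^sub>M count_space UNIV" "B j \<in> sets M"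
    using insert by auto
  have "discrete_choquet M v N (\<lambda>\<omega>. Z \<omega> + (\<Sum>j\<in>insert j F. of_bool (\<omega> \<in> B j)))
      = discrete_choquet M v N (\<lambda>\<omega>. (Z \<omega> + of_bool (\<omega> \<in> B j)) + (\<Sum>j\<in>F. of_bool (\<omega> \<in> B j)))"
    by (simp only: sum.insert[OF insert(1,2)] add.assoc)
  also have "\<dots> \<le> discrete_choquet M v N (\<lambda>\<omega>. Z \<omega> + of_bool (\<omega> \<in> B j)) + (\<Sum>j\<in>F. v (B j))"
    by (rule insert.IH) (use insert.prems in measurable)
  also have "\<dots> \<le> discrete_choquet M v N Z + v (B j) + (\<Sum>j\<in>F. v (B j))"
    using discrete_choquet_add_indicator_le[OF v, of Z "B j" N] by simp
  also have "\<dots> = discrete_choquet M v N Z + (\<Sum>j\<in>insert j F. v (B j))"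
    by (simp add: sum.insert[OF insert(1,2)])
  finally show ?case .
qed simp

lemma discrete_choquet_add_le:
  assumes v: "submodular_capacity M v"
    and [measurable]: "Z \<in> M \<rightarrow>\<^sub>M count_space UNIV" "Z' \<in> M \<rightarrow>\<^sub>M count_space UNIV"
    and Z'N: "\<And>\<omega>. \<omega> \<in> space M \<Longrightarrow> Z' \<omega> \<le> N'"
  shows "discrete_choquet M v N (\<lambda>\<omega>. Z \<omega> + Z' \<omega>) \<le> discrete_choquet M v N Z + discrete_choquet M v N' Z'"
proof -
  have "Z' \<omega> = (\<Sum>k=1..N'. of_bool (\<omega> \<in> {\<omega> \<in> space M. k \<le> Z' \<omega>}))" if "\<omega> \<in> space M" for \<omega>
  proof -
    have "{1..N'} \<inter> {k. k \<le> Z' \<omega>} = {1..Z' \<omega>}"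
      using Z'N[OF that] by auto
    then show ?thesis
      using that by (simp add: sum.If_cases)
  qed
  then have "discrete_choquet M v N (\<lambda>\<omega>. Z \<omega> + Z' \<omega>)
      = discrete_choquet M v N (\<lambda>\<omega>. Z \<omega> + (\<Sum>k=1..N'. of_bool (\<omega> \<in> {\<omega> \<in> space M. k \<le> Z' \<omega>})))"
    by (intro discrete_choquet_cong) simp
  also have "\<dots> \<le> discrete_choquet M v N Z + discrete_choquet M v N' Z'"
    unfolding discrete_choquet_def[of M v N' Z']
    by (rule discrete_choquet_add_indicators_le[OF v]) measurable
  finally show ?thesis .
qed

lemma choquet_add_le_discretized:
  assumes v: "submodular_capacity M v" and X: "X \<in> bdd_meas M" and Y: "Y \<in> bdd_meas M"
    and \<delta>: "0 < \<delta>"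
    and ZX: "ZX \<in> M \<rightarrow>\<^sub>M count_space UNIV" "\<And>\<omega>. \<omega> \<in> space M \<Longrightarrow> ZX \<omega> \<le> NX"
    and XZ: "\<And>\<omega>. \<omega> \<in> space M \<Longrightarrow> a + \<delta> * real (ZX \<omega>) \<le> X \<omega> \<and> X \<omega> \<le> a + \<delta> * real (ZX \<omega>) + \<delta>"
    and ZY: "ZY \<in> M \<rightarrow>\<^sub>M count_space UNIV" "\<And>\<omega>. \<omega> \<in> space M \<Longrightarrow> ZY \<omega> \<le> NY"
    and YZ: "\<And>\<omega>. \<omega> \<in> space M \<Longrightarrow> c + \<delta> * real (ZY \<omega>) \<le> Y \<omega> \<and> Y \<omega> \<le> c + \<delta> * real (ZY \<omega>) + \<delta>"
  shows "choquet M v (\<lambda>\<omega>. X \<omega> + Y \<omega>) \<le> choquet M v X + choquet M v Y + 2 * \<delta>"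
proof -
  have cap: "capacity M v"
    by (rule submodular_capacityD(1)[OF v])
  have ZXY: "(\<lambda>\<omega>. ZX \<omega> + ZY \<omega>) \<in> M \<rightarrow>\<^sub>M count_space UNIV"
    using ZX(1) ZY(1) by measurable
  have sum_bound: "ZX \<omega> + ZY \<omega> \<le> NX + NY" if "\<omega> \<in> space M" for \<omega>
    using ZX(2) ZY(2) that by (simp add: add_mono)
  have "X \<omega> + Y \<omega> \<le> (a + c + 2 * \<delta>) + \<delta> * real (ZX \<omega> + ZY \<omega>)" if "\<omega> \<in> space M" for \<omega>
    unfolding of_nat_add distrib_left using XZ[OF that] YZ[OF that] by linarith
  then have "choquet M v (\<lambda>\<omega>. X \<omega> + Y \<omega>) \<le> choquet M v (\<lambda>\<omega>. (a + c + 2 * \<delta>) + \<delta> * real (ZX \<omega> + ZY \<omega>))"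
    by (intro choquet_mono[OF cap cap _ bdd_meas_add[OF X Y] bdd_meas_step_function[OF ZXY sum_bound]]) auto
  also have "\<dots> = (a + c + 2 * \<delta>) + \<delta> * discrete_choquet M v (NX + NY) (\<lambda>\<omega>. ZX \<omega> + ZY \<omega>)"
    by (rule choquet_step_function[OF cap ZXY sum_bound \<delta>])
  also have "\<dots> \<le> (a + c + 2 * \<delta>) + \<delta> * (discrete_choquet M v NX ZX + discrete_choquet M v NY ZY)"
  proof -
    have "discrete_choquet M v (NX + NY) (\<lambda>\<omega>. ZX \<omega> + ZY \<omega>)
        \<le> discrete_choquet M v (NX + NY) ZX + discrete_choquet M v NY ZY"
      by (rule discrete_choquet_add_le[OF v ZX(1) ZY])
    also have "discrete_choquet M v (NX + NY) ZX = discrete_choquet M v NX ZX"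
      by (rule discrete_choquet_extend[OF cap ZX(2) le_add1])
    finally show ?thesis
      using \<delta> by simp
  qed
  also have "\<dots> \<le> choquet M v X + choquet M v Y + 2 * \<delta>"
    using choquet_discretization_bounds(1)[OF cap X ZX \<delta> XZ]
      choquet_discretization_bounds(1)[OF cap Y ZY \<delta> YZ] by (simp add: algebra_simps)
  finally show ?thesis .
qed

lemma choquet_add_le:
  assumes v: "submodular_capacity M v" and X: "X \<in> bdd_meas M" and Y: "Y \<in> bdd_meas M"
  shows "choquet M v (\<lambda>\<omega>. X \<omega> + Y \<omega>) \<le> choquet M v X + choquet M v Y"
proof (rule field_le_epsilon)
  fix e :: real
  assume "0 < e"
  then have \<delta>: "0 < e / 2"
    by simp
  obtain a b where ab: "\<And>\<omega>. \<omega> \<in> space M \<Longrightarrow> a \<le> X \<omega> \<and> X \<omega> \<le> b"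
    using bdd_meas_bounds[OF X] by blast
  obtain c d where cd: "\<And>\<omega>. \<omega> \<in> space M \<Longrightarrow> c \<le> Y \<omega> \<and> Y \<omega> \<le> d"
    using bdd_meas_bounds[OF Y] by blast
  obtain ZX NX where ZX: "ZX \<in> M \<rightarrow>\<^sub>M count_space UNIV" "\<And>\<omega>. \<omega> \<in> space M \<Longrightarrow> ZX \<omega> \<le> NX"
    and XZ: "\<And>\<omega>. \<omega> \<in> space M \<Longrightarrow> a + e / 2 * real (ZX \<omega>) \<le> X \<omega> \<and> X \<omega> \<le> a + e / 2 * real (ZX \<omega>) + e / 2"
    using discretization[OF bdd_meas_borel[OF X] ab \<delta>] by blast
  obtain ZY NY where ZY: "ZY \<in> M \<rightarrow>\<^sub>M count_space UNIV" "\<And>\<omega>. \<omega> \<in> space M \<Longrightarrow> ZY \<omega> \<le> NY"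
    and YZ: "\<And>\<omega>. \<omega> \<in> space M \<Longrightarrow> c + e / 2 * real (ZY \<omega>) \<le> Y \<omega> \<and> Y \<omega> \<le> c + e / 2 * real (ZY \<omega>) + e / 2"
    using discretization[OF bdd_meas_borel[OF Y] cd \<delta>] by blast
  show "choquet M v (\<lambda>\<omega>. X \<omega> + Y \<omega>) \<le> choquet M v X + choquet M v Y + e"
    using choquet_add_le_discretized[OF v X Y \<delta> ZX XZ ZY YZ] by simp
qed

lemma choquet_sum_le:
  assumes v: "submodular_capacity M v" and "finite F" and "\<And>j. j \<in> F \<Longrightarrow> Y j \<in> bdd_meas M"
  shows "choquet M v (\<lambda>\<omega>. \<Sum>j\<in>F. Y j \<omega>) \<le> (\<Sum>j\<in>F. choquet M v (Y j))"
  using assms(2,3)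
proof (induction F rule: finite_induct)
  case empty
  then show ?case
    using choquet_const[OF submodular_capacityD(1)[OF v], of 0] by simp
next
  case (insert j F)
  have "choquet M v (\<lambda>\<omega>. Y j \<omega> + (\<Sum>j\<in>F. Y j \<omega>)) \<le> choquet M v (Y j) + choquet M v (\<lambda>\<omega>. \<Sum>j\<in>F. Y j \<omega>)"
    by (rule choquet_add_le[OF v]) (use insert bdd_meas_sum[of F Y M] in auto)
  then show ?case
    using insert by simp
qed

section \<open>Expected shortfall as a Choquet integral\<close>

definition distorted :: "real \<Rightarrow> ('a set \<Rightarrow> real) \<Rightarrow> 'a set \<Rightarrow> real" where
  "distorted \<alpha> w A = min (w A / \<alpha>) 1"

lemma capacity_distorted: "capacity M w \<Longrightarrow> 0 < \<alpha> \<Longrightarrow> \<alpha> \<le> 1 \<Longrightarrow> capacity M (distorted \<alpha> w)"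
  unfolding capacity_def distorted_def by (auto simp: divide_right_mono min.coboundedI1)

lemma submodular_capacity_distorted:
  assumes w: "submodular_capacity M w" and \<alpha>: "0 < \<alpha>" "\<alpha> \<le> 1"
  shows "submodular_capacity M (distorted \<alpha> w)"
proof -
  have cw: "capacity M w"
    by (rule submodular_capacityD(1)[OF w])
  have "distorted \<alpha> w (A \<union> B) + distorted \<alpha> w (A \<inter> B) \<le> distorted \<alpha> w A + distorted \<alpha> w B"
    if A: "A \<in> sets M" and B: "B \<in> sets M" for A B
  proof -
    have "w (A \<union> B) + w (A \<inter> B) \<le> w A + w B"
      by (rule submodular_capacityD(2)[OF w A B])
    moreover have "w (A \<inter> B) \<le> w A" "w (A \<inter> B) \<le> w B" "w A \<le> w (A \<union> B)" "w B \<le> w (A \<union> B)"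
      using capacity_mono[OF cw] A B by auto
    ultimately have "min (w (A \<union> B)) \<alpha> + min (w (A \<inter> B)) \<alpha> \<le> min (w A) \<alpha> + min (w B) \<alpha>"
      by (auto simp: min_def)
    moreover have "distorted \<alpha> w C = min (w C) \<alpha> / \<alpha>" for C
      unfolding distorted_def using \<alpha> by (auto simp: min_def field_simps)
    ultimately show ?thesis
      using \<alpha> by (simp add: add_divide_distrib[symmetric] divide_right_mono)
  qed
  then show ?thesis
    using capacity_distorted[OF cw \<alpha>] unfolding submodular_capacity_def by auto
qed

definition upper_quantile :: "(real \<Rightarrow> real) \<Rightarrow> real \<Rightarrow> real" where
  "upper_quantile g t = Inf {x. g x \<le> t}"

lemma VaR_eq_upper_quantile: "VaR M w t X = upper_quantile (\<lambda>x. w (upper_set M X x)) t"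
  unfolding VaR_def upper_quantile_def ..

context survival_function
begin

context
  fixes t :: real
  assumes t: "0 \<le> t" "t < 1"
begin

lemma sublevel_nonempty: "{x. g x \<le> t} \<noteq> {}"
proof -
  have "b + 1 \<in> {x. g x \<le> t}"
    using eq_0[of "b + 1"] t by simp
  then show ?thesis
    by blast
qed

lemma sublevel_ge: "g x \<le> t \<Longrightarrow> a \<le> x"
  using eq_1[of x] t by (cases "x \<le> a") auto

lemma sublevel_bdd_below: "bdd_below {x. g x \<le> t}"
  using sublevel_ge by (intro bdd_belowI) auto

lemma upper_quantile_ge: "a \<le> upper_quantile g t"
  unfolding upper_quantile_def
  by (rule cInf_greatest[OF sublevel_nonempty]) (simp add: sublevel_ge)

lemma upper_quantile_le: "upper_quantile g t \<le> b"
proof (rule ccontr)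
  assume "\<not> upper_quantile g t \<le> b"
  then have "(b + upper_quantile g t) / 2 \<in> {x. g x \<le> t}"
    using eq_0 t by auto
  then have "upper_quantile g t \<le> (b + upper_quantile g t) / 2"
    unfolding upper_quantile_def by (rule cInf_lower[OF _ sublevel_bdd_below])
  then show False
    using \<open>\<not> upper_quantile g t \<le> b\<close> by (simp add: field_simps)
qed

lemma less_upper_quantile: "x < upper_quantile g t \<Longrightarrow> t < g x"
  using cInf_lower[OF _ sublevel_bdd_below, of x] unfolding upper_quantile_def by force

lemma le_upper_quantile: "t < g x \<Longrightarrow> x \<le> upper_quantile g t"
proof (rule ccontr)
  assume "t < g x" "\<not> x \<le> upper_quantile g t"
  then obtain y where "g y \<le> t" "y < x"
    using cInf_lessD[OF sublevel_nonempty] unfolding upper_quantile_def by force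
  then show False
    using antimonoD[OF antimono, of y x] \<open>t < g x\<close> by simp
qed

end

lemma upper_quantile_antimono:
  assumes "0 \<le> s" "s \<le> t" "t < 1"
  shows "upper_quantile g t \<le> upper_quantile g s"
  unfolding upper_quantile_def
proof (rule cInf_superset_mono)
  show "{x. g x \<le> s} \<noteq> {}"
    using sublevel_nonempty[of s] assms by simp
  show "bdd_below {x. g x \<le> t}"
    using sublevel_bdd_below[of t] assms by simp
qed (use assms in auto)

lemma emeasure_superlevel_section:
  assumes t: "0 \<le> t" "t < 1"
  shows "emeasure lborel {x. a \<le> x \<and> x \<le> b \<and> t < g x} = ennreal (upper_quantile g t - a)"
proof -
  let ?S = "{x. a \<le> x \<and> x \<le> b \<and> t < g x}"
  have "?S \<in> sets lborel"
    by measurable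
  moreover have "{a..<upper_quantile g t} \<subseteq> ?S"
    using less_upper_quantile[OF t] upper_quantile_le[OF t] by force
  moreover have "?S \<subseteq> {a..upper_quantile g t}"
    using le_upper_quantile[OF t] by force
  ultimately have "emeasure lborel {a..<upper_quantile g t} \<le> emeasure lborel ?S"
    and "emeasure lborel ?S \<le> emeasure lborel {a..upper_quantile g t}"
    by (auto intro: emeasure_mono)
  then show ?thesis
    using upper_quantile_ge[OF t] by (simp add: antisym)
qed

text \<open>Both sides are the area of \<open>{(t, x). 0 \<le> t < \<alpha>, a \<le> x \<le> b, t < g x}\<close>, computed by sections.\<close>

lemma nn_integral_min_eq_nn_integral_upper_quantile:
  assumes \<alpha>: "0 < \<alpha>" "\<alpha> \<le> 1"
  shows "(\<integral>\<^sup>+ x. ennreal (indicator {a..b} x * min (g x) \<alpha>) \<partial>lborel)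
       = (\<integral>\<^sup>+ t. ennreal (indicator {0..<\<alpha>} t * (upper_quantile g t - a)) \<partial>lborel)"
proof -
  define R where "R = {p \<in> space (lborel \<Otimes>\<^sub>M lborel).
    0 \<le> fst p \<and> fst p < \<alpha> \<and> a \<le> snd p \<and> snd p \<le> b \<and> fst p < g (snd p)}"
  have "R \<in> sets (lborel \<Otimes>\<^sub>M lborel)"
    unfolding R_def by measurable
  then have R_measurable: "(\<lambda>(t, x). indicator R (t, x) :: ennreal) \<in> borel_measurable (lborel \<Otimes>\<^sub>M lborel)"
    by simp
  have R_eq: "R = {(t, x). 0 \<le> t \<and> t < \<alpha> \<and> a \<le> x \<and> x \<le> b \<and> t < g x}"
    unfolding R_def by (auto simp: space_pair_measure)
  have section_x: "(\<integral>\<^sup>+ t. indicator R (t, x) \<partial>lborel) = ennreal (indicator {a..b} x * min (g x) \<alpha>)" for x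
  proof (cases "a \<le> x \<and> x \<le> b")
    case True
    then have "(\<lambda>t. indicator R (t, x) :: ennreal) = indicator {0..<min (g x) \<alpha>}"
      unfolding R_eq by (auto simp: fun_eq_iff indicator_def)
    then show ?thesis
      using True bounds[of x] \<alpha> by simp
  qed (auto simp: R_eq indicator_def)
  have section_t: "(\<integral>\<^sup>+ x. indicator R (t, x) \<partial>lborel) = ennreal (indicator {0..<\<alpha>} t * (upper_quantile g t - a))" for t
  proof (cases "0 \<le> t \<and> t < \<alpha>")
    case True
    then have t: "0 \<le> t" "t < 1"
      using \<alpha> by auto
    have "(\<lambda>x. indicator R (t, x) :: ennreal) = indicator {x. a \<le> x \<and> x \<le> b \<and> t < g x}"
      unfolding R_eq using True by (auto simp: fun_eq_iff indicator_def)
    moreover have "{x. a \<le> x \<and> x \<le> b \<and> t < g x} \<in> sets lborel"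
      by measurable
    ultimately show ?thesis
      using emeasure_superlevel_section[OF t] True by simp
  qed (auto simp: R_eq indicator_def)
  show ?thesis
    using lborel_pair.Fubini'[OF R_measurable] unfolding section_x section_t by simp
qed

lemma borel_measurable_truncated_upper_quantile:
  assumes "\<alpha> \<le> 1"
  shows "(\<lambda>t. indicator {0..<\<alpha>} t * (upper_quantile g t - a)) \<in> borel_measurable lborel"
proof -
  have "mono_on {0..<\<alpha>} (\<lambda>t. a - upper_quantile g t)"
    using upper_quantile_antimono assms by (auto simp: mono_on_def)
  then have "(\<lambda>t. - (a - upper_quantile g t)) \<in> borel_measurable (restrict_space borel {0..<\<alpha>})"
    using borel_measurable_mono_on_fnc by measurable
  then have "(\<lambda>t. upper_quantile g t - a) \<in> borel_measurable (restrict_space borel {0..<\<alpha>})"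
    by simp
  then show ?thesis
    by (subst (asm) borel_measurable_restrict_space_iff) auto
qed

lemma integral_upper_quantile:
  assumes \<alpha>: "0 < \<alpha>" "\<alpha> \<le> 1"
  shows "(LBINT t:{0..\<alpha>}. upper_quantile g t) = \<alpha> * a + integral {a..b} (\<lambda>x. min (g x) \<alpha>)"
proof -
  define Q where "Q = (\<lambda>t. indicator {0..<\<alpha>} t * (upper_quantile g t - a))"
  define P where "P = (\<lambda>x. indicator {a..b} x * min (g x) \<alpha>)"
  have quantile_bounds: "a \<le> upper_quantile g t \<and> upper_quantile g t \<le> b" if "t \<in> {0..<\<alpha>}" for t
    using upper_quantile_ge[of t] upper_quantile_le[of t] that \<alpha> by auto
  have Q_measurable: "Q \<in> borel_measurable lborel"
    unfolding Q_def by (rule borel_measurable_truncated_upper_quantile[OF \<alpha>(2)])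
  have "(\<lambda>x. min (g x) \<alpha>) \<in> borel_measurable borel"
    by measurable
  then have "(LBINT x:{a..b}. min (g x) \<alpha>) = integral {a..b} (\<lambda>x. min (g x) \<alpha>)"
    using bounds \<alpha> by (intro set_borel_integral_eq_integral(2) set_integrable_bounded_Icc[where B=1]) auto
  then have P_integral: "integral\<^sup>L lborel P = integral {a..b} (\<lambda>x. min (g x) \<alpha>)"
    unfolding P_def set_lebesgue_integral_def by simp
  have "integral\<^sup>L lborel P = enn2real (\<integral>\<^sup>+ x. ennreal (P x) \<partial>lborel)"
    unfolding P_def using bounds \<alpha>
    by (intro enn2real_nn_integral_eq_integral[symmetric]) (auto simp: indicator_def)
  also have "\<dots> = enn2real (\<integral>\<^sup>+ t. ennreal (Q t) \<partial>lborel)"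
    unfolding P_def Q_def nn_integral_min_eq_nn_integral_upper_quantile[OF \<alpha>] ..
  also have "\<dots> = integral\<^sup>L lborel Q"
    using quantile_bounds Q_measurable
    by (intro enn2real_nn_integral_eq_integral) (auto simp: Q_def indicator_def)
  finally have "integral\<^sup>L lborel Q = integral {a..b} (\<lambda>x. min (g x) \<alpha>)"
    using P_integral by simp
  moreover have "integrable lborel Q"
    unfolding Q_def
    by (rule integrableI_bounded_set[where A="{0..<\<alpha>}" and B="b - a"])
      (use Q_measurable quantile_bounds \<alpha> in \<open>auto simp: Q_def\<close>)
  \<comment> \<open>The endpoint \<open>t = \<alpha>\<close> is split off: for \<open>\<alpha> = 1\<close> the quantile bounds fail there.\<close>
  moreover have "(\<lambda>t. indicator {0..\<alpha>} t *\<^sub>R upper_quantile g t)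
      = (\<lambda>t. Q t + (indicator {0..<\<alpha>} t * a + indicator {\<alpha>} t * upper_quantile g \<alpha>))"
    unfolding Q_def using \<alpha> by (auto simp: fun_eq_iff indicator_def)
  ultimately show ?thesis
    unfolding set_lebesgue_integral_def using \<alpha> by (simp add: integrable_indicator_iff)
qed

end

lemma ES_eq_choquet_distorted:
  assumes cap: "capacity M w" and \<alpha>: "0 < \<alpha>" "\<alpha> \<le> 1" and X: "X \<in> bdd_meas M"
  shows "ES M w \<alpha> X = choquet M (distorted \<alpha> w) X"
proof -
  obtain a b where ab: "\<And>\<omega>. \<omega> \<in> space M \<Longrightarrow> a \<le> X \<omega> \<and> X \<omega> \<le> b"
    using bdd_meas_bounds[OF X] by blast
  have Xm: "X \<in> borel_measurable M"
    using X by (rule bdd_meas_borel)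
  interpret survival_function "\<lambda>x. w (upper_set M X x)" a b
    by (rule survival_function_upper_set[OF cap Xm ab])
  have "distorted \<alpha> w (upper_set M X x) = (1 / \<alpha>) * min (w (upper_set M X x)) \<alpha>" for x
    unfolding distorted_def using \<alpha> by (auto simp: min_def field_simps)
  then have "choquet M (distorted \<alpha> w) X = a + (1 / \<alpha>) * integral {a..b} (\<lambda>x. min (w (upper_set M X x)) \<alpha>)"
    by (simp add: choquet_eq_interval_integral[OF capacity_distorted[OF cap \<alpha>] Xm ab])
  also have "\<dots> = ES M w \<alpha> X"
    unfolding ES_def VaR_eq_upper_quantile integral_upper_quantile[OF \<alpha>] using \<alpha>
    by (simp add: field_simps)
  finally show ?thesis ..
qed

section \<open>The Hahn-Banach theorem on spaces of real functions\<close>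

locale sublinear_functional =
  fixes V :: "('a \<Rightarrow> real) set" and p :: "('a \<Rightarrow> real) \<Rightarrow> real"
  assumes nonempty: "V \<noteq> {}"
    and add_closed: "x \<in> V \<Longrightarrow> y \<in> V \<Longrightarrow> (\<lambda>\<omega>. x \<omega> + y \<omega>) \<in> V"
    and scale_closed: "x \<in> V \<Longrightarrow> (\<lambda>\<omega>. c * x \<omega>) \<in> V"
    and subadditive: "x \<in> V \<Longrightarrow> y \<in> V \<Longrightarrow> p (\<lambda>\<omega>. x \<omega> + y \<omega>) \<le> p x + p y"
    and pos_homogeneous: "x \<in> V \<Longrightarrow> 0 \<le> c \<Longrightarrow> p (\<lambda>\<omega>. c * x \<omega>) = c * p x"
begin

lemma zero_closed: "(\<lambda>\<omega>. 0) \<in> V"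
  using nonempty scale_closed[of _ 0] by auto

lemma p_zero: "p (\<lambda>\<omega>. 0) = 0"
  using pos_homogeneous[OF zero_closed, of 0] by simp

lemma combination_closed: "x \<in> V \<Longrightarrow> y \<in> V \<Longrightarrow> (\<lambda>\<omega>. x \<omega> + c * y \<omega>) \<in> V"
  using add_closed scale_closed by blast

lemma diff_closed: "x \<in> V \<Longrightarrow> y \<in> V \<Longrightarrow> (\<lambda>\<omega>. x \<omega> - y \<omega>) \<in> V"
  using combination_closed[of x y "-1"] by simp

lemma scale_le:
  assumes x: "x \<in> V"
  shows "c * p x \<le> p (\<lambda>\<omega>. c * x \<omega>)"
proof (cases "0 \<le> c")
  case False
  have "p (\<lambda>\<omega>. c * x \<omega> + (- c) * x \<omega>) \<le> p (\<lambda>\<omega>. c * x \<omega>) + p (\<lambda>\<omega>. (- c) * x \<omega>)"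
    using x by (intro subadditive scale_closed)
  then show ?thesis
    using pos_homogeneous[OF x, of "- c"] False p_zero by simp
qed (simp add: pos_homogeneous[OF x])

text \<open>Partial extensions are represented by their graphs: linear subspaces of \<open>V \<times> \<real>\<close> that are
  graphs of functionals dominated by \<open>p\<close>.\<close>

definition minorant_graph :: "(('a \<Rightarrow> real) \<times> real) set \<Rightarrow> bool" where
  "minorant_graph G \<longleftrightarrow>
     (\<forall>(x, r)\<in>G. x \<in> V \<and> r \<le> p x)
     \<and> (\<forall>(x, r)\<in>G. \<forall>(y, s)\<in>G. ((\<lambda>\<omega>. x \<omega> + y \<omega>), r + s) \<in> G)
     \<and> (\<forall>(x, r)\<in>G. \<forall>c. ((\<lambda>\<omega>. c * x \<omega>), c * r) \<in> G)"

lemma minorant_graphD: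
  assumes "minorant_graph G"
  shows "(x, r) \<in> G \<Longrightarrow> x \<in> V" "(x, r) \<in> G \<Longrightarrow> r \<le> p x"
    and "(x, r) \<in> G \<Longrightarrow> (y, s) \<in> G \<Longrightarrow> ((\<lambda>\<omega>. x \<omega> + y \<omega>), r + s) \<in> G"
    and "(x, r) \<in> G \<Longrightarrow> ((\<lambda>\<omega>. c * x \<omega>), c * r) \<in> G"
  using assms unfolding minorant_graph_def by fast+

lemma minorant_graphI:
  assumes "\<And>x r. (x, r) \<in> G \<Longrightarrow> x \<in> V \<and> r \<le> p x"
    and "\<And>x r y s. (x, r) \<in> G \<Longrightarrow> (y, s) \<in> G \<Longrightarrow> ((\<lambda>\<omega>. x \<omega> + y \<omega>), r + s) \<in> G"
    and "\<And>x r c. (x, r) \<in> G \<Longrightarrow> ((\<lambda>\<omega>. c * x \<omega>), c * r) \<in> G"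
  shows "minorant_graph G"
  using assms unfolding minorant_graph_def by blast

lemma minorant_graph_zero:
  assumes "minorant_graph G" "(x, r) \<in> G"
  shows "((\<lambda>\<omega>. 0), 0) \<in> G"
  using minorant_graphD(4)[OF assms, of 0] by simp

lemma minorant_graph_unique:
  assumes G: "minorant_graph G" and "(x, r) \<in> G" "(x, s) \<in> G"
  shows "r = s"
proof -
  have "r' - s' \<le> 0" if "(x, r') \<in> G" "(x, s') \<in> G" for r' s'
  proof -
    have "((\<lambda>\<omega>. x \<omega> + (-1) * x \<omega>), r' + (-1) * s') \<in> G"
      by (rule minorant_graphD(3)[OF G that(1) minorant_graphD(4)[OF G that(2)]])
    then show ?thesis
      using minorant_graphD(2)[OF G] p_zero by fastforce
  qed
  then have "r - s \<le> 0" "s - r \<le> 0"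
    using assms(2,3) by blast+
  then show ?thesis
    by linarith
qed

lemma minorant_graph_Union:
  assumes graphs: "\<And>G. G \<in> C \<Longrightarrow> minorant_graph G"
    and chain: "\<And>G H. G \<in> C \<Longrightarrow> H \<in> C \<Longrightarrow> G \<subseteq> H \<or> H \<subseteq> G"
  shows "minorant_graph (\<Union>C)"
  unfolding minorant_graph_def
proof (intro conjI)
  show "\<forall>(x, r)\<in>\<Union>C. x \<in> V \<and> r \<le> p x"
    using graphs minorant_graphD(1,2) by fast
  show "\<forall>(x, r)\<in>\<Union>C. \<forall>c. ((\<lambda>\<omega>. c * x \<omega>), c * r) \<in> \<Union>C"
    using graphs minorant_graphD(4) by fast
  show "\<forall>(x, r)\<in>\<Union>C. \<forall>(y, s)\<in>\<Union>C. ((\<lambda>\<omega>. x \<omega> + y \<omega>), r + s) \<in> \<Union>C"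
  proof clarify
    fix x r y s G H
    assume "(x, r) \<in> G" "G \<in> C" "(y, s) \<in> H" "H \<in> C"
    then show "((\<lambda>\<omega>. x \<omega> + y \<omega>), r + s) \<in> \<Union>C"
      using chain[of G H] graphs minorant_graphD(3) by blast
  qed
qed

lemma extension_value_exists:
  assumes G: "minorant_graph G" and "G \<noteq> {}" and z: "z \<in> V"
  obtains r0 where "\<And>y r. (y, r) \<in> G \<Longrightarrow> r - p (\<lambda>\<omega>. y \<omega> - z \<omega>) \<le> r0"
    and "\<And>y r. (y, r) \<in> G \<Longrightarrow> r0 \<le> p (\<lambda>\<omega>. y \<omega> + z \<omega>) - r"
proof -
  have key: "r - p (\<lambda>\<omega>. y \<omega> - z \<omega>) \<le> p (\<lambda>\<omega>. y' \<omega> + z \<omega>) - s"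
    if yr: "(y, r) \<in> G" and ys: "(y', s) \<in> G" for y r y' s
  proof -
    have y: "y \<in> V" "y' \<in> V"
      using minorant_graphD(1)[OF G] yr ys by auto
    have "r + s \<le> p (\<lambda>\<omega>. y \<omega> + y' \<omega>)"
      using minorant_graphD(2,3)[OF G] yr ys by blast
    also have "(\<lambda>\<omega>. y \<omega> + y' \<omega>) = (\<lambda>\<omega>. (y \<omega> - z \<omega>) + (y' \<omega> + z \<omega>))"
      by auto
    also have "p \<dots> \<le> p (\<lambda>\<omega>. y \<omega> - z \<omega>) + p (\<lambda>\<omega>. y' \<omega> + z \<omega>)"
      using y z by (intro subadditive diff_closed add_closed)
    finally show ?thesis
      by simp
  qed
  define S where "S = {r - p (\<lambda>\<omega>. y \<omega> - z \<omega>) | y r. (y, r) \<in> G}"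
  have zero: "((\<lambda>\<omega>. 0), 0) \<in> G"
    using minorant_graph_zero[OF G] \<open>G \<noteq> {}\<close> by fast
  have "S \<noteq> {}"
    using zero unfolding S_def by blast
  moreover have "bdd_above S"
    unfolding S_def using key[OF _ zero] by (auto intro!: bdd_aboveI)
  ultimately show thesis
    using key unfolding S_def by (intro that[of "Sup S"] cSup_upper cSup_least) (auto simp: S_def)
qed

lemma extension_dominated:
  assumes G: "minorant_graph G" and z: "z \<in> V" and yr: "(y, r) \<in> G"
    and below: "\<And>y r. (y, r) \<in> G \<Longrightarrow> r - p (\<lambda>\<omega>. y \<omega> - z \<omega>) \<le> r0"
    and above: "\<And>y r. (y, r) \<in> G \<Longrightarrow> r0 \<le> p (\<lambda>\<omega>. y \<omega> + z \<omega>) - r"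
  shows "r + t * r0 \<le> p (\<lambda>\<omega>. y \<omega> + t * z \<omega>)"
proof -
  have y: "y \<in> V"
    using minorant_graphD(1)[OF G yr] .
  consider "t = 0" | "0 < t" | "t < 0"
    by linarith
  then show ?thesis
  proof cases
    case 1
    then show ?thesis
      using minorant_graphD(2)[OF G yr] by simp
  next
    case 2
    have "r0 \<le> p (\<lambda>\<omega>. (1 / t) * y \<omega> + z \<omega>) - (1 / t) * r"
      by (rule above[OF minorant_graphD(4)[OF G yr]])
    then have "r + t * r0 \<le> t * p (\<lambda>\<omega>. (1 / t) * y \<omega> + z \<omega>)"
      using 2 by (simp add: field_simps)
    also have "\<dots> = p (\<lambda>\<omega>. t * ((1 / t) * y \<omega> + z \<omega>))"
      using 2 y z by (intro pos_homogeneous[symmetric] add_closed scale_closed) auto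
    also have "(\<lambda>\<omega>. t * ((1 / t) * y \<omega> + z \<omega>)) = (\<lambda>\<omega>. y \<omega> + t * z \<omega>)"
      using 2 by (simp add: fun_eq_iff field_simps)
    finally show ?thesis .
  next
    case 3
    define s where "s = - t"
    have s: "0 < s"
      using 3 by (simp add: s_def)
    have "(1 / s) * r - p (\<lambda>\<omega>. (1 / s) * y \<omega> - z \<omega>) \<le> r0"
      by (rule below[OF minorant_graphD(4)[OF G yr]])
    then have "r + t * r0 \<le> s * p (\<lambda>\<omega>. (1 / s) * y \<omega> - z \<omega>)"
      using s by (simp add: s_def field_simps)
    also have "\<dots> = p (\<lambda>\<omega>. s * ((1 / s) * y \<omega> - z \<omega>))"
      using s y z by (intro pos_homogeneous[symmetric] diff_closed scale_closed) auto
    also have "(\<lambda>\<omega>. s * ((1 / s) * y \<omega> - z \<omega>)) = (\<lambda>\<omega>. y \<omega> + t * z \<omega>)"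
      using s by (simp add: fun_eq_iff field_simps s_def)
    finally show ?thesis .
  qed
qed

lemma minorant_graph_extend:
  assumes G: "minorant_graph G" and "G \<noteq> {}" and z: "z \<in> V"
  obtains G' r0 where "minorant_graph G'" "G \<subseteq> G'" "(z, r0) \<in> G'"
proof -
  obtain r0 where below: "\<And>y r. (y, r) \<in> G \<Longrightarrow> r - p (\<lambda>\<omega>. y \<omega> - z \<omega>) \<le> r0"
    and above: "\<And>y r. (y, r) \<in> G \<Longrightarrow> r0 \<le> p (\<lambda>\<omega>. y \<omega> + z \<omega>) - r"
    using extension_value_exists[OF assms] by blast
  define G' where "G' = {((\<lambda>\<omega>. y \<omega> + t * z \<omega>), r + t * r0) | y r t. (y, r) \<in> G}"
  have mem: "((\<lambda>\<omega>. y \<omega> + t * z \<omega>), r + t * r0) \<in> G'" if "(y, r) \<in> G" for y r t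
    unfolding G'_def using that by blast
  have "minorant_graph G'"
  proof (rule minorant_graphI)
    fix x q
    assume "(x, q) \<in> G'"
    then obtain y r t where yr: "(y, r) \<in> G" and x: "x = (\<lambda>\<omega>. y \<omega> + t * z \<omega>)" and q: "q = r + t * r0"
      unfolding G'_def by blast
    show "x \<in> V \<and> q \<le> p x"
      unfolding x q using minorant_graphD(1)[OF G yr] z extension_dominated[OF G z yr below above]
      by (simp add: combination_closed)
    fix c
    have "(\<lambda>\<omega>. c * x \<omega>) = (\<lambda>\<omega>. c * y \<omega> + (c * t) * z \<omega>)" and "c * q = c * r + (c * t) * r0"
      unfolding x q by (auto simp: fun_eq_iff algebra_simps)
    then show "((\<lambda>\<omega>. c * x \<omega>), c * q) \<in> G'"
      using mem[OF minorant_graphD(4)[OF G yr]] by simp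
  next
    fix x q x' q'
    assume "(x, q) \<in> G'" "(x', q') \<in> G'"
    then obtain y r t y' r' t' where yr: "(y, r) \<in> G" "(y', r') \<in> G"
      and x: "x = (\<lambda>\<omega>. y \<omega> + t * z \<omega>)" "x' = (\<lambda>\<omega>. y' \<omega> + t' * z \<omega>)"
      and q: "q = r + t * r0" "q' = r' + t' * r0"
      unfolding G'_def by blast
    have "(\<lambda>\<omega>. x \<omega> + x' \<omega>) = (\<lambda>\<omega>. (y \<omega> + y' \<omega>) + (t + t') * z \<omega>)" and "q + q' = (r + r') + (t + t') * r0"
      unfolding x q by (auto simp: fun_eq_iff algebra_simps)
    then show "((\<lambda>\<omega>. x \<omega> + x' \<omega>), q + q') \<in> G'"
      using mem[OF minorant_graphD(3)[OF G yr]] by simp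
  qed
  moreover have "G \<subseteq> G'"
    using mem[of _ _ 0] by auto
  moreover have "(z, r0) \<in> G'"
    using mem[OF minorant_graph_zero[OF G], of _ _ 1] \<open>G \<noteq> {}\<close> by fastforce
  ultimately show thesis
    by (rule that)
qed

lemma minorant_graph_line:
  assumes x0: "x0 \<in> V"
  shows "minorant_graph {((\<lambda>\<omega>. c * x0 \<omega>), c * p x0) | c. True}" (is "minorant_graph ?G")
proof (rule minorant_graphI)
  fix x r
  assume "(x, r) \<in> ?G"
  then obtain c where c: "x = (\<lambda>\<omega>. c * x0 \<omega>)" "r = c * p x0"
    by blast
  then show "x \<in> V \<and> r \<le> p x"
    using x0 scale_closed scale_le by simp
  fix y s d
  assume "(y, s) \<in> ?G"
  then obtain c' where c': "y = (\<lambda>\<omega>. c' * x0 \<omega>)" "s = c' * p x0"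
    by blast
  have "(\<lambda>\<omega>. x \<omega> + y \<omega>) = (\<lambda>\<omega>. (c + c') * x0 \<omega>)" "r + s = (c + c') * p x0"
    unfolding c c' by (auto simp: fun_eq_iff algebra_simps)
  then show "((\<lambda>\<omega>. x \<omega> + y \<omega>), r + s) \<in> ?G"
    by blast
  have "(\<lambda>\<omega>. d * x \<omega>) = (\<lambda>\<omega>. (d * c) * x0 \<omega>)" "d * r = (d * c) * p x0"
    unfolding c by (auto simp: fun_eq_iff)
  then show "((\<lambda>\<omega>. d * x \<omega>), d * r) \<in> ?G"
    by blast
qed

theorem hahn_banach:
  assumes x0: "x0 \<in> V"
  obtains f where "\<And>x y. x \<in> V \<Longrightarrow> y \<in> V \<Longrightarrow> f (\<lambda>\<omega>. x \<omega> + y \<omega>) = f x + f y"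
    and "\<And>x c. x \<in> V \<Longrightarrow> f (\<lambda>\<omega>. c * x \<omega>) = c * f x"
    and "\<And>x. x \<in> V \<Longrightarrow> f x \<le> p x" and "f x0 = p x0"
proof -
  define A where "A = {G. minorant_graph G \<and> (x0, p x0) \<in> G}"
  define G0 where "G0 = {((\<lambda>\<omega>. c * x0 \<omega>), c * p x0) | c. True}"
  have "minorant_graph G0"
    unfolding G0_def by (rule minorant_graph_line[OF x0])
  moreover have "(x0, p x0) \<in> G0"
    unfolding G0_def by (auto intro!: exI[of _ 1])
  ultimately have "G0 \<in> A"
    unfolding A_def by blast
  moreover have "\<Union>C \<in> A" if "C \<noteq> {}" "subset.chain A C" for C
    using that minorant_graph_Union[of C] unfolding A_def subset_chain_def by blast
  ultimately obtain Gm where Gm: "minorant_graph Gm" "(x0, p x0) \<in> Gm"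
    and maximal: "\<And>G. G \<in> A \<Longrightarrow> Gm \<subseteq> G \<Longrightarrow> G = Gm"
    using subset_Zorn_nonempty[of A] unfolding A_def by blast
  have total: "\<exists>r. (x, r) \<in> Gm" if x: "x \<in> V" for x
  proof -
    obtain G' r where "minorant_graph G'" "Gm \<subseteq> G'" "(x, r) \<in> G'"
      using minorant_graph_extend[OF Gm(1) _ x] Gm(2) by blast
    then show ?thesis
      using maximal[of G'] Gm(2) unfolding A_def by blast
  qed
  define f where "f x = (THE r. (x, r) \<in> Gm)" for x
  have f_eq: "f x = r" if "(x, r) \<in> Gm" for x r
    unfolding f_def using that minorant_graph_unique[OF Gm(1)] by blast
  show thesis
  proof (rule that)
    fix x y c
    assume x: "x \<in> V" and y: "y \<in> V"
    obtain r s where r: "(x, r) \<in> Gm" and s: "(y, s) \<in> Gm"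
      using total[OF x] total[OF y] by blast
    show "f (\<lambda>\<omega>. x \<omega> + y \<omega>) = f x + f y"
      using f_eq[OF minorant_graphD(3)[OF Gm(1) r s]] f_eq[OF r] f_eq[OF s] by simp
    show "f (\<lambda>\<omega>. c * x \<omega>) = c * f x"
      using f_eq[OF minorant_graphD(4)[OF Gm(1) r]] f_eq[OF r] by simp
    show "f x \<le> p x"
      using minorant_graphD(2)[OF Gm(1) r] f_eq[OF r] by simp
  qed (rule f_eq[OF Gm(2)])
qed

end

section \<open>Monotone linear functionals are Choquet integrals\<close>

locale monotone_linear_functional =
  fixes M :: "'a measure" and f :: "('a \<Rightarrow> real) \<Rightarrow> real"
  assumes add: "X \<in> bdd_meas M \<Longrightarrow> Y \<in> bdd_meas M \<Longrightarrow> f (\<lambda>\<omega>. X \<omega> + Y \<omega>) = f X + f Y"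
    and scale: "X \<in> bdd_meas M \<Longrightarrow> f (\<lambda>\<omega>. c * X \<omega>) = c * f X"
    and mono: "X \<in> bdd_meas M \<Longrightarrow> Y \<in> bdd_meas M \<Longrightarrow> (\<And>\<omega>. \<omega> \<in> space M \<Longrightarrow> X \<omega> \<le> Y \<omega>) \<Longrightarrow> f X \<le> f Y"
    and one: "f (\<lambda>\<omega>. 1) = 1"
begin

lemma const: "f (\<lambda>\<omega>. c) = c"
  using scale[OF bdd_meas_const[of 1 M], of c] one by simp

lemma linear_sum: "finite F \<Longrightarrow> (\<And>j. j \<in> F \<Longrightarrow> Y j \<in> bdd_meas M) \<Longrightarrow> f (\<lambda>\<omega>. \<Sum>j\<in>F. Y j \<omega>) = (\<Sum>j\<in>F. f (Y j))"
proof (induction F rule: finite_induct)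
  case empty
  then show ?case
    using const[of 0] by simp
next
  case (insert j F)
  then have "f (\<lambda>\<omega>. Y j \<omega> + (\<Sum>j\<in>F. Y j \<omega>)) = f (Y j) + f (\<lambda>\<omega>. \<Sum>j\<in>F. Y j \<omega>)"
    using bdd_meas_sum[of F Y M] by (intro add) auto
  then show ?case
    using insert by simp
qed

lemma submodular_capacity: "submodular_capacity M (\<lambda>A. f (indicator A))"
  unfolding submodular_capacity_def capacity_def
proof (intro conjI ballI impI)
  fix A B
  assume A: "A \<in> sets M" and B: "B \<in> sets M"
  show "f (indicator A) \<le> f (indicator B)" if "A \<subseteq> B"
    using that by (intro mono bdd_meas_indicator A B) (auto simp: indicator_def)
  have "f (indicator (A \<union> B)) + f (indicator (A \<inter> B)) = f (\<lambda>\<omega>. indicator (A \<union> B) \<omega> + indicator (A \<inter> B) \<omega>)"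
    using A B by (intro add[symmetric] bdd_meas_indicator) auto
  also have "(\<lambda>\<omega>. indicator (A \<union> B) \<omega> + indicator (A \<inter> B) \<omega>) = (\<lambda>\<omega>. indicator A \<omega> + (indicator B \<omega> :: real))"
    by (auto simp: fun_eq_iff indicator_def)
  also have "f \<dots> = f (indicator A) + f (indicator B)"
    using A B by (intro add bdd_meas_indicator)
  finally show "f (indicator (A \<union> B)) + f (indicator (A \<inter> B)) \<le> f (indicator A) + f (indicator B)"
    by simp
next
  have "(indicator {} :: 'a \<Rightarrow> real) = (\<lambda>\<omega>. 0)"
    by (auto simp: fun_eq_iff)
  then show "f (indicator {}) = 0"
    using const[of 0] by simp
next
  have "f (indicator (space M)) = f (\<lambda>\<omega>. 1)"
    by (intro antisym mono bdd_meas_indicator bdd_meas_const) (auto simp: indicator_def)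
  then show "f (indicator (space M)) = 1"
    using one by simp
qed

lemma step_function:
  assumes "Z \<in> M \<rightarrow>\<^sub>M count_space UNIV" and ZN: "\<And>\<omega>. \<omega> \<in> space M \<Longrightarrow> Z \<omega> \<le> N"
  shows "f (\<lambda>\<omega>. a + \<delta> * real (Z \<omega>)) = a + \<delta> * discrete_choquet M (\<lambda>A. f (indicator A)) N Z"
proof -
  have levels: "{\<omega> \<in> space M. k \<le> Z \<omega>} \<in> sets M" for k
    using assms(1) by measurable
  have "real (Z \<omega>) = (\<Sum>k=1..N. indicator {\<omega> \<in> space M. k \<le> Z \<omega>} \<omega>)" if "\<omega> \<in> space M" for \<omega>
  proof -
    have "{1..N} \<inter> {k. k \<le> Z \<omega>} = {1..Z \<omega>}"
      using ZN[OF that] by auto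
    then show ?thesis
      using that by (simp add: indicator_def sum.If_cases)
  qed
  then have "f (\<lambda>\<omega>. a + \<delta> * real (Z \<omega>)) = f (\<lambda>\<omega>. a + \<delta> * (\<Sum>k=1..N. indicator {\<omega> \<in> space M. k \<le> Z \<omega>} \<omega>))"
    by (intro antisym mono bdd_meas_add bdd_meas_cmult bdd_meas_const bdd_meas_sum bdd_meas_indicator
        bdd_meas_step_function[OF assms] levels) auto
  also have "\<dots> = a + \<delta> * (\<Sum>k=1..N. f (indicator {\<omega> \<in> space M. k \<le> Z \<omega>}))"
    using levels by (simp add: add scale const linear_sum bdd_meas_indicator bdd_meas_cmult bdd_meas_sum bdd_meas_const)
  finally show ?thesis
    unfolding discrete_choquet_def .
qed

theorem choquet_eq:
  assumes X: "X \<in> bdd_meas M"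
  shows "choquet M (\<lambda>A. f (indicator A)) X = f X"
proof -
  let ?w = "\<lambda>A. f (indicator A)"
  have cap: "capacity M ?w"
    using submodular_capacity by (rule submodular_capacityD)
  obtain a b where ab: "\<And>\<omega>. \<omega> \<in> space M \<Longrightarrow> a \<le> X \<omega> \<and> X \<omega> \<le> b"
    using bdd_meas_bounds[OF X] by blast
  have close: "choquet M ?w X \<le> f X + \<delta>" "f X \<le> choquet M ?w X + \<delta>" if \<delta>: "0 < \<delta>" for \<delta>
  proof -
    obtain Z N where Z: "Z \<in> M \<rightarrow>\<^sub>M count_space UNIV" "\<And>\<omega>. \<omega> \<in> space M \<Longrightarrow> Z \<omega> \<le> N"
      and XZ: "\<And>\<omega>. \<omega> \<in> space M \<Longrightarrow> a + \<delta> * real (Z \<omega>) \<le> X \<omega> \<and> X \<omega> \<le> a + \<delta> * real (Z \<omega>) + \<delta>"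
      using discretization[OF bdd_meas_borel[OF X] ab \<delta>] by blast
    have "f (\<lambda>\<omega>. a + \<delta> * real (Z \<omega>)) \<le> f X"
      using XZ by (intro mono bdd_meas_step_function[OF Z] X) auto
    moreover have "f X \<le> f (\<lambda>\<omega>. (a + \<delta>) + \<delta> * real (Z \<omega>))"
      using XZ by (intro mono bdd_meas_step_function[OF Z] X) (auto simp: algebra_simps)
    ultimately show "choquet M ?w X \<le> f X + \<delta>" "f X \<le> choquet M ?w X + \<delta>"
      using choquet_discretization_bounds[OF cap X Z \<delta> XZ]
        step_function[OF Z, of a \<delta>] step_function[OF Z, of "a + \<delta>" \<delta>] by simp_all
  qed
  show ?thesis
    using field_le_epsilon[OF close(1)] field_le_epsilon[OF close(2)] by (rule antisym)
qed

end

section \<open>Inf-convolutions of monotone sublinear functionals\<close>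

locale sublinear_family =
  fixes M :: "'a measure" and n :: nat and \<rho> :: "nat \<Rightarrow> ('a \<Rightarrow> real) \<Rightarrow> real"
  assumes n_pos: "0 < n"
    and mono: "i < n \<Longrightarrow> X \<in> bdd_meas M \<Longrightarrow> Y \<in> bdd_meas M \<Longrightarrow>
      (\<And>\<omega>. \<omega> \<in> space M \<Longrightarrow> X \<omega> \<le> Y \<omega>) \<Longrightarrow> \<rho> i X \<le> \<rho> i Y"
    and subadditive: "i < n \<Longrightarrow> X \<in> bdd_meas M \<Longrightarrow> Y \<in> bdd_meas M \<Longrightarrow>
      \<rho> i (\<lambda>\<omega>. X \<omega> + Y \<omega>) \<le> \<rho> i X + \<rho> i Y"
    and pos_homogeneous: "i < n \<Longrightarrow> X \<in> bdd_meas M \<Longrightarrow> 0 < c \<Longrightarrow> \<rho> i (\<lambda>\<omega>. c * X \<omega>) = c * \<rho> i X"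
    and const: "i < n \<Longrightarrow> \<rho> i (\<lambda>\<omega>. c) = c"
begin

definition decomposition_sums :: "('a \<Rightarrow> real) \<Rightarrow> real set" where
  "decomposition_sums X = {(\<Sum>i<n. \<rho> i (Y i)) | Y.
     (\<forall>i<n. Y i \<in> bdd_meas M) \<and> (\<forall>\<omega>\<in>space M. (\<Sum>i<n. Y i \<omega>) = X \<omega>)}"

lemma inf_conv_eq: "inf_conv M n \<rho> X = (INF s\<in>decomposition_sums X. ereal s)"
proof -
  have "{ereal (\<Sum>i<n. \<rho> i (Y i)) | Y. (\<forall>i<n. Y i \<in> bdd_meas M) \<and> (\<forall>\<omega>\<in>space M. (\<Sum>i<n. Y i \<omega>) = X \<omega>)}
      = ereal ` decomposition_sums X"
    unfolding decomposition_sums_def by blast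
  then show ?thesis
    unfolding inf_conv_def by (simp add: image_image)
qed

lemma decomposition_sumsE:
  assumes "s \<in> decomposition_sums X"
  obtains Y where "\<And>i. i < n \<Longrightarrow> Y i \<in> bdd_meas M" "\<And>\<omega>. \<omega> \<in> space M \<Longrightarrow> (\<Sum>i<n. Y i \<omega>) = X \<omega>"
    and "s = (\<Sum>i<n. \<rho> i (Y i))"
proof -
  obtain Y where "(\<forall>i<n. Y i \<in> bdd_meas M) \<and> (\<forall>\<omega>\<in>space M. (\<Sum>i<n. Y i \<omega>) = X \<omega>)"
    and "s = (\<Sum>i<n. \<rho> i (Y i))"
    using assms unfolding decomposition_sums_def by blast
  then show thesis
    using that by blast
qed

lemma decomposition_sumsI:
  "(\<And>i. i < n \<Longrightarrow> Y i \<in> bdd_meas M) \<Longrightarrow> (\<And>\<omega>. \<omega> \<in> space M \<Longrightarrow> (\<Sum>i<n. Y i \<omega>) = X \<omega>)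
    \<Longrightarrow> (\<Sum>i<n. \<rho> i (Y i)) \<in> decomposition_sums X"
  unfolding decomposition_sums_def by blast

lemma decomposition_sums_cong: "(\<And>\<omega>. \<omega> \<in> space M \<Longrightarrow> X \<omega> = X' \<omega>) \<Longrightarrow> decomposition_sums X = decomposition_sums X'"
  unfolding decomposition_sums_def by auto

lemma component_in_decomposition_sums:
  assumes j: "j < n" and X: "X \<in> bdd_meas M"
  shows "\<rho> j X \<in> decomposition_sums X"
proof -
  define Y where "Y i = (if i = j then X else (\<lambda>\<omega>. 0))" for i
  have "(\<Sum>i<n. \<rho> i (Y i)) \<in> decomposition_sums X"
  proof (rule decomposition_sumsI)
    show "Y i \<in> bdd_meas M" for i
      unfolding Y_def using X bdd_meas_const by auto
    have "(\<Sum>i<n. Y i \<omega>) = (\<Sum>i<n. if i = j then X \<omega> else 0)" for \<omega>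
      by (intro sum.cong) (auto simp: Y_def)
    then show "(\<Sum>i<n. Y i \<omega>) = X \<omega>" for \<omega>
      using j by simp
  qed
  moreover have "(\<Sum>i<n. \<rho> i (Y i)) = (\<Sum>i<n. if i = j then \<rho> j X else 0)"
    by (intro sum.cong) (auto simp: Y_def const)
  ultimately show ?thesis
    using j by simp
qed

lemma inf_conv_le: "j < n \<Longrightarrow> X \<in> bdd_meas M \<Longrightarrow> inf_conv M n \<rho> X \<le> ereal (\<rho> j X)"
  unfolding inf_conv_eq by (rule INF_lower) (rule component_in_decomposition_sums)

lemma decomposition_sums_nonempty: "X \<in> bdd_meas M \<Longrightarrow> decomposition_sums X \<noteq> {}"
  using component_in_decomposition_sums[OF n_pos] by blast

lemma decomposition_sums_add:
  assumes "s \<in> decomposition_sums X" "t \<in> decomposition_sums X'"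
  obtains u where "u \<in> decomposition_sums (\<lambda>\<omega>. X \<omega> + X' \<omega>)" "u \<le> s + t"
proof -
  obtain Y where Y: "\<And>i. i < n \<Longrightarrow> Y i \<in> bdd_meas M" "\<And>\<omega>. \<omega> \<in> space M \<Longrightarrow> (\<Sum>i<n. Y i \<omega>) = X \<omega>"
    and s: "s = (\<Sum>i<n. \<rho> i (Y i))"
    using decomposition_sumsE[OF assms(1)] by blast
  obtain Y' where Y': "\<And>i. i < n \<Longrightarrow> Y' i \<in> bdd_meas M" "\<And>\<omega>. \<omega> \<in> space M \<Longrightarrow> (\<Sum>i<n. Y' i \<omega>) = X' \<omega>"
    and t: "t = (\<Sum>i<n. \<rho> i (Y' i))"
    using decomposition_sumsE[OF assms(2)] by blast
  show thesis
  proof (rule that)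
    show "(\<Sum>i<n. \<rho> i (\<lambda>\<omega>. Y i \<omega> + Y' i \<omega>)) \<in> decomposition_sums (\<lambda>\<omega>. X \<omega> + X' \<omega>)"
      using Y Y' by (intro decomposition_sumsI) (auto simp: sum.distrib bdd_meas_add)
    show "(\<Sum>i<n. \<rho> i (\<lambda>\<omega>. Y i \<omega> + Y' i \<omega>)) \<le> s + t"
      unfolding s t sum.distrib[symmetric] using Y(1) Y'(1) by (intro sum_mono subadditive) auto
  qed
qed

lemma decomposition_sums_cmult:
  assumes "s \<in> decomposition_sums X" and c: "0 < c"
  shows "c * s \<in> decomposition_sums (\<lambda>\<omega>. c * X \<omega>)"
proof -
  obtain Y where Y: "\<And>i. i < n \<Longrightarrow> Y i \<in> bdd_meas M" "\<And>\<omega>. \<omega> \<in> space M \<Longrightarrow> (\<Sum>i<n. Y i \<omega>) = X \<omega>"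
    and s: "s = (\<Sum>i<n. \<rho> i (Y i))"
    using decomposition_sumsE[OF assms(1)] by blast
  have "c * s = (\<Sum>i<n. \<rho> i (\<lambda>\<omega>. c * Y i \<omega>))"
    unfolding s sum_distrib_left using Y(1) c by (intro sum.cong) (auto simp: pos_homogeneous)
  also have "\<dots> \<in> decomposition_sums (\<lambda>\<omega>. c * X \<omega>)"
    using Y by (intro decomposition_sumsI) (auto simp: bdd_meas_cmult sum_distrib_left[symmetric])
  finally show ?thesis .
qed

lemma decomposition_sums_mono:
  assumes "s \<in> decomposition_sums X'" and X: "X \<in> bdd_meas M" and X': "X' \<in> bdd_meas M"
    and le: "\<And>\<omega>. \<omega> \<in> space M \<Longrightarrow> X \<omega> \<le> X' \<omega>"
  obtains u where "u \<in> decomposition_sums X" "u \<le> s"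
proof -
  obtain Y where Y: "\<And>i. i < n \<Longrightarrow> Y i \<in> bdd_meas M" "\<And>\<omega>. \<omega> \<in> space M \<Longrightarrow> (\<Sum>i<n. Y i \<omega>) = X' \<omega>"
    and s: "s = (\<Sum>i<n. \<rho> i (Y i))"
    using decomposition_sumsE[OF assms(1)] by blast
  define Z where "Z i = (if i = 0 then (\<lambda>\<omega>. Y 0 \<omega> + (X \<omega> - X' \<omega>)) else Y i)" for i
  have Z: "Z i \<in> bdd_meas M" if "i < n" for i
    unfolding Z_def using Y(1) that n_pos bdd_meas_add bdd_meas_diff[OF X X'] by auto
  show thesis
  proof (rule that)
    have "(\<Sum>i<n. Z i \<omega>) = (\<Sum>i<n. Y i \<omega> + (if i = 0 then X \<omega> - X' \<omega> else 0))" for \<omega>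
      by (intro sum.cong) (auto simp: Z_def)
    then have "(\<Sum>i<n. Z i \<omega>) = (\<Sum>i<n. Y i \<omega>) + (X \<omega> - X' \<omega>)" for \<omega>
      using n_pos by (simp add: sum.distrib)
    then show "(\<Sum>i<n. \<rho> i (Z i)) \<in> decomposition_sums X"
      using Y(2) by (intro decomposition_sumsI Z) auto
    show "(\<Sum>i<n. \<rho> i (Z i)) \<le> s"
      unfolding s
    proof (rule sum_mono)
      fix i
      assume "i \<in> {..<n}"
      then show "\<rho> i (Z i) \<le> \<rho> i (Y i)"
        using le by (intro mono Z Y(1)) (auto simp: Z_def)
    qed
  qed
qed

lemma bdd_below_decomposition_sums_if_finite:
  assumes X0: "X0 \<in> bdd_meas M" and finite: "inf_conv M n \<rho> X0 \<noteq> -\<infinity>" and X: "X \<in> bdd_meas M"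
  shows "bdd_below (decomposition_sums X)"
proof -
  have "inf_conv M n \<rho> X0 \<le> ereal (\<rho> 0 X0)"
    by (rule inf_conv_le[OF n_pos X0])
  with finite obtain L where L_eq: "inf_conv M n \<rho> X0 = ereal L"
    by (cases "inf_conv M n \<rho> X0") auto
  have L: "L \<le> u" if "u \<in> decomposition_sums X0" for u
  proof -
    have "ereal L \<le> ereal u"
      unfolding L_eq[symmetric] inf_conv_eq using that by (rule INF_lower)
    then show ?thesis
      by simp
  qed
  \<comment> \<open>Subadditivity transfers the lower bound from \<open>X0\<close> to \<open>X\<close>, as \<open>X + (X0 - X) = X0\<close>.\<close>
  obtain t0 where t0: "t0 \<in> decomposition_sums (\<lambda>\<omega>. X0 \<omega> - X \<omega>)"
    using decomposition_sums_nonempty[OF bdd_meas_diff[OF X0 X]] by blast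
  have "L - t0 \<le> s" if s: "s \<in> decomposition_sums X" for s
  proof -
    obtain u where "u \<in> decomposition_sums (\<lambda>\<omega>. X \<omega> + (X0 \<omega> - X \<omega>))" "u \<le> s + t0"
      by (rule decomposition_sums_add[OF s t0])
    moreover have "decomposition_sums (\<lambda>\<omega>. X \<omega> + (X0 \<omega> - X \<omega>)) = decomposition_sums X0"
      by (rule decomposition_sums_cong) simp
    ultimately show ?thesis
      using L by fastforce
  qed
  then show ?thesis
    by (intro bdd_belowI)
qed

lemma choquet_le_inf_conv:
  assumes w: "submodular_capacity M w"
    and le: "\<And>i Y. i < n \<Longrightarrow> Y \<in> bdd_meas M \<Longrightarrow> choquet M w Y \<le> \<rho> i Y"
    and X: "X \<in> bdd_meas M"
  shows "ereal (choquet M w X) \<le> inf_conv M n \<rho> X"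
  unfolding inf_conv_eq
proof (rule INF_greatest)
  fix s
  assume "s \<in> decomposition_sums X"
  then obtain Y where Y: "\<And>i. i < n \<Longrightarrow> Y i \<in> bdd_meas M" "\<And>\<omega>. \<omega> \<in> space M \<Longrightarrow> (\<Sum>i<n. Y i \<omega>) = X \<omega>"
    and s: "s = (\<Sum>i<n. \<rho> i (Y i))"
    using decomposition_sumsE by blast
  have "choquet M w X = choquet M w (\<lambda>\<omega>. \<Sum>i<n. Y i \<omega>)"
    using Y(2) by (intro choquet_cong) simp
  also have "\<dots> \<le> (\<Sum>i<n. choquet M w (Y i))"
    using Y(1) by (intro choquet_sum_le[OF w]) auto
  also have "\<dots> \<le> s"
    unfolding s using Y(1) by (intro sum_mono le) auto
  finally show "ereal (choquet M w X) \<le> ereal s"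
    by simp
qed

end

locale finite_sublinear_family = sublinear_family +
  assumes bdd_below_decomposition_sums: "X \<in> bdd_meas M \<Longrightarrow> bdd_below (decomposition_sums X)"
begin

definition inf_conv_real :: "('a \<Rightarrow> real) \<Rightarrow> real" where
  "inf_conv_real X = Inf (decomposition_sums X)"

lemma inf_conv_eq_inf_conv_real: "X \<in> bdd_meas M \<Longrightarrow> inf_conv M n \<rho> X = ereal (inf_conv_real X)"
  unfolding inf_conv_eq inf_conv_real_def
  using ereal_Inf'[OF bdd_below_decomposition_sums decomposition_sums_nonempty] by simp

lemma inf_conv_real_le: "X \<in> bdd_meas M \<Longrightarrow> s \<in> decomposition_sums X \<Longrightarrow> inf_conv_real X \<le> s"
  unfolding inf_conv_real_def by (rule cInf_lower[OF _ bdd_below_decomposition_sums])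

lemma inf_conv_real_greatest: "X \<in> bdd_meas M \<Longrightarrow> (\<And>s. s \<in> decomposition_sums X \<Longrightarrow> c \<le> s) \<Longrightarrow> c \<le> inf_conv_real X"
  unfolding inf_conv_real_def by (rule cInf_greatest[OF decomposition_sums_nonempty])

lemma inf_conv_real_le_component: "j < n \<Longrightarrow> X \<in> bdd_meas M \<Longrightarrow> inf_conv_real X \<le> \<rho> j X"
  by (intro inf_conv_real_le component_in_decomposition_sums)

lemma inf_conv_real_add_le:
  assumes X: "X \<in> bdd_meas M" and Y: "Y \<in> bdd_meas M"
  shows "inf_conv_real (\<lambda>\<omega>. X \<omega> + Y \<omega>) \<le> inf_conv_real X + inf_conv_real Y"
proof -
  have "inf_conv_real (\<lambda>\<omega>. X \<omega> + Y \<omega>) - t \<le> inf_conv_real X" if t: "t \<in> decomposition_sums Y" for t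
  proof (rule inf_conv_real_greatest[OF X])
    fix s
    assume "s \<in> decomposition_sums X"
    then obtain u where "u \<in> decomposition_sums (\<lambda>\<omega>. X \<omega> + Y \<omega>)" "u \<le> s + t"
      using t by (rule decomposition_sums_add)
    then show "inf_conv_real (\<lambda>\<omega>. X \<omega> + Y \<omega>) - t \<le> s"
      using inf_conv_real_le[OF bdd_meas_add[OF X Y]] by fastforce
  qed
  then have "inf_conv_real (\<lambda>\<omega>. X \<omega> + Y \<omega>) - inf_conv_real X \<le> inf_conv_real Y"
    by (intro inf_conv_real_greatest[OF Y]) (simp add: algebra_simps)
  then show ?thesis
    by simp
qed

lemma inf_conv_real_cmult_pos:
  assumes X: "X \<in> bdd_meas M" and c: "0 < c"
  shows "inf_conv_real (\<lambda>\<omega>. c * X \<omega>) = c * inf_conv_real X"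
proof (rule antisym)
  have cX: "(\<lambda>\<omega>. c * X \<omega>) \<in> bdd_meas M"
    using X by (rule bdd_meas_cmult)
  have "inf_conv_real (\<lambda>\<omega>. c * X \<omega>) / c \<le> inf_conv_real X"
  proof (rule inf_conv_real_greatest[OF X])
    fix s
    assume "s \<in> decomposition_sums X"
    then have "inf_conv_real (\<lambda>\<omega>. c * X \<omega>) \<le> c * s"
      using c by (intro inf_conv_real_le[OF cX] decomposition_sums_cmult)
    then show "inf_conv_real (\<lambda>\<omega>. c * X \<omega>) / c \<le> s"
      using c by (simp add: field_simps)
  qed
  then show "inf_conv_real (\<lambda>\<omega>. c * X \<omega>) \<le> c * inf_conv_real X"
    using c by (simp add: field_simps)
  have "inf_conv_real X \<le> inf_conv_real (\<lambda>\<omega>. c * X \<omega>) / c"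
  proof -
    have "c * inf_conv_real X \<le> u" if u: "u \<in> decomposition_sums (\<lambda>\<omega>. c * X \<omega>)" for u
    proof -
      have "(1 / c) * u \<in> decomposition_sums (\<lambda>\<omega>. (1 / c) * (c * X \<omega>))"
        using c by (intro decomposition_sums_cmult[OF u]) simp
      also have "decomposition_sums (\<lambda>\<omega>. (1 / c) * (c * X \<omega>)) = decomposition_sums X"
        using c by (intro decomposition_sums_cong) simp
      finally have "inf_conv_real X \<le> (1 / c) * u"
        by (rule inf_conv_real_le[OF X])
      then show ?thesis
        using c by (simp add: field_simps)
    qed
    then have "c * inf_conv_real X \<le> inf_conv_real (\<lambda>\<omega>. c * X \<omega>)"
      by (rule inf_conv_real_greatest[OF cX])
    then show ?thesis
      using c by (simp add: field_simps)
  qed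
  then show "c * inf_conv_real X \<le> inf_conv_real (\<lambda>\<omega>. c * X \<omega>)"
    using c by (simp add: field_simps)
qed

lemma inf_conv_real_zero: "inf_conv_real (\<lambda>\<omega>. 0) = 0"
  using inf_conv_real_cmult_pos[OF bdd_meas_const, of 2 0] by simp

lemma inf_conv_real_cmult:
  assumes "X \<in> bdd_meas M" and "0 \<le> c"
  shows "inf_conv_real (\<lambda>\<omega>. c * X \<omega>) = c * inf_conv_real X"
  using assms inf_conv_real_zero inf_conv_real_cmult_pos[of X c] by (cases "c = 0") auto

lemma inf_conv_real_mono:
  assumes X: "X \<in> bdd_meas M" and X': "X' \<in> bdd_meas M"
    and le: "\<And>\<omega>. \<omega> \<in> space M \<Longrightarrow> X \<omega> \<le> X' \<omega>"
  shows "inf_conv_real X \<le> inf_conv_real X'"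
proof (rule inf_conv_real_greatest[OF X'])
  fix s
  assume "s \<in> decomposition_sums X'"
  then obtain u where "u \<in> decomposition_sums X" "u \<le> s"
    using X X' le by (rule decomposition_sums_mono)
  then show "inf_conv_real X \<le> s"
    using inf_conv_real_le[OF X] by fastforce
qed

lemma inf_conv_real_const: "inf_conv_real (\<lambda>\<omega>. c) = c"
proof -
  have "inf_conv_real (\<lambda>\<omega>. c) \<le> c" "inf_conv_real (\<lambda>\<omega>. - c) \<le> - c"
    using inf_conv_real_le_component[OF n_pos bdd_meas_const] const[OF n_pos] by auto
  moreover have "inf_conv_real (\<lambda>\<omega>. c + - c) \<le> inf_conv_real (\<lambda>\<omega>. c) + inf_conv_real (\<lambda>\<omega>. - c)"
    by (rule inf_conv_real_add_le[OF bdd_meas_const bdd_meas_const])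
  ultimately show ?thesis
    using inf_conv_real_zero by simp
qed

sublocale sublinear_functional "bdd_meas M" inf_conv_real
proof
  show "bdd_meas M \<noteq> {}"
    using bdd_meas_const[of 0 M] by blast
qed (auto intro: bdd_meas_add bdd_meas_cmult inf_conv_real_add_le inf_conv_real_cmult)

theorem choquet_representation:
  assumes X0: "X0 \<in> bdd_meas M"
  obtains w where "submodular_capacity M w"
    and "\<And>i A. i < n \<Longrightarrow> A \<in> sets M \<Longrightarrow> w A \<le> \<rho> i (indicator A)"
    and "choquet M w X0 = inf_conv_real X0"
proof -
  obtain f where add: "\<And>X Y. X \<in> bdd_meas M \<Longrightarrow> Y \<in> bdd_meas M \<Longrightarrow> f (\<lambda>\<omega>. X \<omega> + Y \<omega>) = f X + f Y"
    and scale: "\<And>X c. X \<in> bdd_meas M \<Longrightarrow> f (\<lambda>\<omega>. c * X \<omega>) = c * f X"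
    and le: "\<And>X. X \<in> bdd_meas M \<Longrightarrow> f X \<le> inf_conv_real X" and at_X0: "f X0 = inf_conv_real X0"
    using hahn_banach[OF X0] by blast
  have diff: "f (\<lambda>\<omega>. X \<omega> - Y \<omega>) = f X - f Y" if "X \<in> bdd_meas M" "Y \<in> bdd_meas M" for X Y
    using add[OF that(1) bdd_meas_cmult[OF that(2), of "-1"]] scale[OF that(2), of "-1"] by simp
  interpret monotone_linear_functional M f
  proof
    fix X Y
    assume X: "X \<in> bdd_meas M" and Y: "Y \<in> bdd_meas M" and XY: "\<And>\<omega>. \<omega> \<in> space M \<Longrightarrow> X \<omega> \<le> Y \<omega>"
    have "f X - f Y \<le> inf_conv_real (\<lambda>\<omega>. X \<omega> - Y \<omega>)"
      using le[OF bdd_meas_diff[OF X Y]] diff[OF X Y] by simp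
    also have "\<dots> \<le> inf_conv_real (\<lambda>\<omega>. 0)"
      using XY by (intro inf_conv_real_mono bdd_meas_diff X Y bdd_meas_const) simp
    finally show "f X \<le> f Y"
      using inf_conv_real_zero by simp
  next
    have "f (\<lambda>\<omega>. 1) \<le> 1" "f (\<lambda>\<omega>. (-1) * 1) \<le> - 1"
      using le[OF bdd_meas_const] inf_conv_real_const by (auto simp del: mult_minus_left)
    then show "f (\<lambda>\<omega>. 1) = 1"
      using scale[OF bdd_meas_const, of "-1" 1] by simp
  qed (use add scale in auto)
  show thesis
  proof (rule that)
    show "submodular_capacity M (\<lambda>A. f (indicator A))"
      by (rule submodular_capacity)
    show "f (indicator A) \<le> \<rho> i (indicator A)" if "i < n" "A \<in> sets M" for i A
      using le[OF bdd_meas_indicator] inf_conv_real_le_component[OF _ bdd_meas_indicator] that by force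
    show "choquet M (\<lambda>A. f (indicator A)) X0 = inf_conv_real X0"
      using choquet_eq[OF X0] at_X0 by simp
  qed
qed

end

theorem (in sublinear_family) inf_conv_choquet_representation:
  assumes X0: "X0 \<in> bdd_meas M" and finite: "inf_conv M n \<rho> X0 \<noteq> -\<infinity>"
  obtains w where "submodular_capacity M w"
    and "\<And>i A. i < n \<Longrightarrow> A \<in> sets M \<Longrightarrow> w A \<le> \<rho> i (indicator A)"
    and "inf_conv M n \<rho> X0 = ereal (choquet M w X0)"
proof -
  interpret finite_sublinear_family M n \<rho>
    by unfold_locales (rule bdd_below_decomposition_sums_if_finite[OF X0 finite])
  obtain w where "submodular_capacity M w" "\<And>i A. i < n \<Longrightarrow> A \<in> sets M \<Longrightarrow> w A \<le> \<rho> i (indicator A)"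
    and "choquet M w X0 = inf_conv_real X0"
    using choquet_representation[OF X0] by blast
  then show thesis
    using that inf_conv_eq_inf_conv_real[OF X0] by simp
qed

section \<open>Inf-convolutions of expected shortfalls\<close>

lemma distorted_antimono:
  assumes "capacity M w" "A \<in> sets M" "0 < \<alpha>" "\<alpha> \<le> \<beta>"
  shows "distorted \<beta> w A \<le> distorted \<alpha> w A"
proof -
  have "w A / \<beta> \<le> w A / \<alpha>"
    using assms capacity_nonneg[OF assms(1,2)] by (intro divide_left_mono) auto
  then show ?thesis
    unfolding distorted_def by (rule min.mono) simp
qed

lemma choquet_le_ES:
  assumes u: "capacity M u" and v: "capacity M v" and \<alpha>: "0 < \<alpha>" "\<alpha> \<le> 1"
    and le: "\<And>A. A \<in> sets M \<Longrightarrow> u A \<le> distorted \<alpha> v A" and Y: "Y \<in> bdd_meas M"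
  shows "choquet M u Y \<le> ES M v \<alpha> Y"
  unfolding ES_eq_choquet_distorted[OF v \<alpha> Y]
  by (rule choquet_mono[OF u capacity_distorted[OF v \<alpha>] le Y Y]) auto

lemma ES_indicator:
  assumes "capacity M w" "0 < \<alpha>" "\<alpha> \<le> 1" "A \<in> sets M"
  shows "ES M w \<alpha> (indicator A) = distorted \<alpha> w A"
  using assms by (simp add: ES_eq_choquet_distorted bdd_meas_indicator choquet_indicator capacity_distorted)

lemma sublinear_family_ES:
  assumes n: "0 < n" and \<alpha>: "\<And>i. i < n \<Longrightarrow> 0 < \<alpha> i \<and> \<alpha> i \<le> 1"
    and ws: "\<And>i. i < n \<Longrightarrow> submodular_capacity M (ws i)"
  shows "sublinear_family M n (\<lambda>i. ES M (ws i) (\<alpha> i))"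
proof
  fix i X Y c
  assume i: "i < n"
  have cap: "capacity M (ws i)"
    using ws[OF i] by (rule submodular_capacityD)
  note ES = ES_eq_choquet_distorted[OF cap conjunct1[OF \<alpha>[OF i]] conjunct2[OF \<alpha>[OF i]]]
  have dcap: "submodular_capacity M (distorted (\<alpha> i) (ws i))"
    using submodular_capacity_distorted ws \<alpha> i by blast
  note dcap' = submodular_capacityD(1)[OF dcap]
  show "ES M (ws i) (\<alpha> i) (\<lambda>\<omega>. c) = c"
    using ES[OF bdd_meas_const] choquet_const[OF dcap'] by simp
  assume X: "X \<in> bdd_meas M"
  show "0 < c \<Longrightarrow> ES M (ws i) (\<alpha> i) (\<lambda>\<omega>. c * X \<omega>) = c * ES M (ws i) (\<alpha> i) X"
    using X by (simp add: ES bdd_meas_cmult choquet_cmult[OF dcap'])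
  assume Y: "Y \<in> bdd_meas M"
  show "ES M (ws i) (\<alpha> i) (\<lambda>\<omega>. X \<omega> + Y \<omega>) \<le> ES M (ws i) (\<alpha> i) X + ES M (ws i) (\<alpha> i) Y"
    using X Y by (simp add: ES bdd_meas_add choquet_add_le[OF dcap])
  show "(\<And>\<omega>. \<omega> \<in> space M \<Longrightarrow> X \<omega> \<le> Y \<omega>) \<Longrightarrow> ES M (ws i) (\<alpha> i) X \<le> ES M (ws i) (\<alpha> i) Y"
    using X Y by (simp add: ES choquet_mono[OF dcap' dcap'])
qed (rule n)

lemma le_Min_iff_le_distorted:
  fixes n :: nat and ws :: "nat \<Rightarrow> 'a set \<Rightarrow> real" and \<alpha> :: "nat \<Rightarrow> real"
  assumes "capacity M w" "0 < n"
  shows "(\<forall>A\<in>sets M. w A \<le> Min ((\<lambda>i. ws i A / \<alpha> i) ` {..<n}))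
    \<longleftrightarrow> (\<forall>i<n. \<forall>A\<in>sets M. w A \<le> distorted (\<alpha> i) (ws i) A)"
proof -
  have "u \<le> Min ((\<lambda>i. ws i A / \<alpha> i) ` {..<n}) \<longleftrightarrow> (\<forall>i<n. u \<le> ws i A / \<alpha> i)" for u A
    using assms(2) by (subst Min_ge_iff) auto
  then show ?thesis
    using capacity_le_1[OF assms(1)] by (auto simp: distorted_def)
qed

lemma inf_conv_ES_eq_Sup_choquet:
  assumes n: "0 < n" and \<alpha>: "\<And>i. i < n \<Longrightarrow> 0 < \<alpha> i \<and> \<alpha> i \<le> 1"
    and ws: "\<And>i. i < n \<Longrightarrow> submodular_capacity M (ws i)" and X: "X \<in> bdd_meas M"
  shows "inf_conv M n (\<lambda>i. ES M (ws i) (\<alpha> i)) X =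
    Sup {ereal (choquet M w X) | w. submodular_capacity M w \<and>
      (\<forall>A\<in>sets M. w A \<le> Min ((\<lambda>i. ws i A / \<alpha> i) ` {..<n}))}"
proof -
  interpret sublinear_family M n "\<lambda>i. ES M (ws i) (\<alpha> i)"
    by (rule sublinear_family_ES[OF n \<alpha> ws])
  have cap: "capacity M (ws i)" if "i < n" for i
    using ws[OF that] by (rule submodular_capacityD)
  let ?W = "{ereal (choquet M w X) | w. submodular_capacity M w \<and>
    (\<forall>i<n. \<forall>A\<in>sets M. w A \<le> distorted (\<alpha> i) (ws i) A)}"
  have "?W = {ereal (choquet M w X) | w. submodular_capacity M w \<and>
      (\<forall>A\<in>sets M. w A \<le> Min ((\<lambda>i. ws i A / \<alpha> i) ` {..<n}))}"
    by (simp add: le_Min_iff_le_distorted[OF submodular_capacityD(1) n] cong: conj_cong)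
  moreover have "Sup ?W \<le> inf_conv M n (\<lambda>i. ES M (ws i) (\<alpha> i)) X"
  proof (rule Sup_least, clarify)
    fix w
    assume w: "submodular_capacity M w" "\<forall>i<n. \<forall>A\<in>sets M. w A \<le> distorted (\<alpha> i) (ws i) A"
    show "ereal (choquet M w X) \<le> inf_conv M n (\<lambda>i. ES M (ws i) (\<alpha> i)) X"
    proof (rule choquet_le_inf_conv[OF w(1) _ X])
      fix i Y
      assume "i < n" "Y \<in> bdd_meas M"
      then show "choquet M w Y \<le> ES M (ws i) (\<alpha> i) Y"
        using w(2) \<alpha> by (intro choquet_le_ES[OF submodular_capacityD(1)[OF w(1)] cap]) auto
    qed
  qed
  moreover have "inf_conv M n (\<lambda>i. ES M (ws i) (\<alpha> i)) X \<le> Sup ?W"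
  proof (cases "inf_conv M n (\<lambda>i. ES M (ws i) (\<alpha> i)) X = -\<infinity>")
    case False
    then obtain w where "submodular_capacity M w"
      and "\<And>i A. i < n \<Longrightarrow> A \<in> sets M \<Longrightarrow> w A \<le> ES M (ws i) (\<alpha> i) (indicator A)"
      and "inf_conv M n (\<lambda>i. ES M (ws i) (\<alpha> i)) X = ereal (choquet M w X)"
      using inf_conv_choquet_representation[OF X] by blast
    moreover have "w A \<le> distorted (\<alpha> i) (ws i) A" if "i < n" "A \<in> sets M" for i A
      using calculation(2)[OF that] \<alpha>[OF that(1)] cap[OF that(1)] that(2) by (simp add: ES_indicator)
    ultimately show ?thesis
      by (intro Sup_upper) auto
  qed simp
  ultimately show ?thesis
    by simp
qed

lemma inf_conv_ES_same_capacity: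
  assumes n: "0 < n" and \<alpha>: "\<And>i. i < n \<Longrightarrow> 0 < \<alpha> i \<and> \<alpha> i \<le> 1"
    and w: "submodular_capacity M w" and X: "X \<in> bdd_meas M"
  shows "inf_conv M n (\<lambda>i. ES M w (\<alpha> i)) X = ereal (ES M w (Max (\<alpha> ` {..<n})) X)"
proof -
  interpret sublinear_family M n "\<lambda>i. ES M w (\<alpha> i)"
    using sublinear_family_ES[OF n \<alpha>, where ws="\<lambda>_. w"] w by simp
  have cap: "capacity M w"
    using w by (rule submodular_capacityD)
  have "Max (\<alpha> ` {..<n}) \<in> \<alpha> ` {..<n}"
    using n by (intro Max_in) auto
  then obtain j where j: "j < n" "\<alpha> j = Max (\<alpha> ` {..<n})"
    by (metis imageE lessThan_iff)
  have \<alpha>j: "0 < \<alpha> j" "\<alpha> j \<le> 1"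
    using \<alpha>[OF j(1)] by auto
  have "ereal (choquet M (distorted (\<alpha> j) w) X) \<le> inf_conv M n (\<lambda>i. ES M w (\<alpha> i)) X"
  proof (rule choquet_le_inf_conv[OF submodular_capacity_distorted[OF w \<alpha>j] _ X])
    fix i Y
    assume "i < n" "Y \<in> bdd_meas M"
    then show "choquet M (distorted (\<alpha> j) w) Y \<le> ES M w (\<alpha> i) Y"
      using \<alpha> j cap by (intro choquet_le_ES capacity_distorted cap \<alpha>j distorted_antimono) auto
  qed
  moreover have "inf_conv M n (\<lambda>i. ES M w (\<alpha> i)) X \<le> ereal (ES M w (\<alpha> j) X)"
    by (rule inf_conv_le[OF j(1) X])
  ultimately show ?thesis
    using ES_eq_choquet_distorted[OF cap \<alpha>j X] j(2) by simp
qed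

theorem corollary4:
  fixes M :: "'a measure" and n :: nat and \<alpha> :: "nat \<Rightarrow> real"
    and ws :: "nat \<Rightarrow> 'a set \<Rightarrow> real"
  assumes "n \<ge> 1"
    and "\<And>i. i < n \<Longrightarrow> 0 < \<alpha> i \<and> \<alpha> i \<le> 1"
    and "\<And>i. i < n \<Longrightarrow> submodular_capacity M (ws i)"
  shows "(\<forall>X\<in>bdd_meas M.
            inf_conv M n (\<lambda>i. ES M (ws i) (\<alpha> i)) X =
            Sup {ereal (choquet M w X) | w. submodular_capacity M w \<and>
                   (\<forall>A\<in>sets M. w A \<le> Min ((\<lambda>i. ws i A / \<alpha> i) ` {..<n}))})
       \<and> (\<forall>w. submodular_capacity M w \<longrightarrow>
            (\<forall>X\<in>bdd_meas M.
               inf_conv M n (\<lambda>i. ES M w (\<alpha> i)) X = ereal (ES M w (Max (\<alpha> ` {..<n})) X)))"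
  using inf_conv_ES_eq_Sup_choquet[of n \<alpha> M ws] inf_conv_ES_same_capacity[of n \<alpha> M] assms
  by auto

end
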